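(* Let $T$ be a simplex in $\mathbb{E}^3$ whose four facets can be partitioned into two pairs $\{F_1,F_2\}$, $\{F_3,F_4\}$ with $\mathrm{area}(F_1)=\mathrm{area}(F_2)\neq\mathrm{area}(F_3)=\mathrm{area}(F_4)$. Then there are at most $28$ isolated local extrema (direction vectors $v$, $v^2=1$) of the squared radius of a circumscribing cylinder of $T$; in this case the cubic $g_1$ factors into a linear and an irreducible quadratic factor, and the local extrema can be computed from two polynomial systems with Bézout numbers $20$ and $8$, respectively.
   Context: Place a vertex of $T$ at the origin, let $p_1,p_2,p_3$ be the other vertices, $M=(p_1,p_2,p_3)^T$, $w(v)=(v^2p_i^2-(v\cdot p_i)^2)_{i=1,2,3}$, $U(v)=\frac12M^{-1}w(v)$, $f(v)=U(v)\cdot U(v)$ (squared radius), $g_1(v)=U(v)\cdot v$ (homogeneous cubic), $g_2(v)=v^2-1$. Circumscribing cylinders of $T$ (cylinders, i.e. sets of points at fixed distance $\rho>0$ from a line, containing all vertices of $T$) correspond to directions $v$ with $g_1(v)=0$, $g_2(v)=0$, with squared radius $f(v)$; a local extremum means a local extremum of $f$ on $\{g_1=g_2=0\}$. *)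

theory Defs
  imports "HOL-Analysis.Analysis"
begin

text \<open>A simplex T in E^3 with one vertex at the origin and other vertices p1 p2 p3.\<close>

definition cyl_M :: "real^3 \<Rightarrow> real^3 \<Rightarrow> real^3 \<Rightarrow> real^3^3" where
  "cyl_M p1 p2 p3 = vector [p1, p2, p3]"

definition cyl_w :: "real^3 \<Rightarrow> real^3 \<Rightarrow> real^3 \<Rightarrow> real^3 \<Rightarrow> real^3" where
  "cyl_w p1 p2 p3 v = vector
     [ (v \<bullet> v) * (p1 \<bullet> p1) - (v \<bullet> p1)^2,
       (v \<bullet> v) * (p2 \<bullet> p2) - (v \<bullet> p2)^2,
       (v \<bullet> v) * (p3 \<bullet> p3) - (v \<bullet> p3)^2 ]"

definition cyl_U :: "real^3 \<Rightarrow> real^3 \<Rightarrow> real^3 \<Rightarrow> real^3 \<Rightarrow> real^3" where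
  "cyl_U p1 p2 p3 v = (1/2) *\<^sub>R (matrix_inv (cyl_M p1 p2 p3) *v cyl_w p1 p2 p3 v)"

definition cyl_f :: "real^3 \<Rightarrow> real^3 \<Rightarrow> real^3 \<Rightarrow> real^3 \<Rightarrow> real" where
  "cyl_f p1 p2 p3 v = cyl_U p1 p2 p3 v \<bullet> cyl_U p1 p2 p3 v"

definition cyl_g1 :: "real^3 \<Rightarrow> real^3 \<Rightarrow> real^3 \<Rightarrow> real^3 \<Rightarrow> real" where
  "cyl_g1 p1 p2 p3 v = cyl_U p1 p2 p3 v \<bullet> v"

definition cyl_g2 :: "real^3 \<Rightarrow> real" where
  "cyl_g2 v = v \<bullet> v - 1"

definition cyl_dirs :: "real^3 \<Rightarrow> real^3 \<Rightarrow> real^3 \<Rightarrow> (real^3) set" where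
  "cyl_dirs p1 p2 p3 = {v. cyl_g1 p1 p2 p3 v = 0 \<and> cyl_g2 v = 0}"

definition cyl_local_extremum :: "real^3 \<Rightarrow> real^3 \<Rightarrow> real^3 \<Rightarrow> real^3 \<Rightarrow> bool" where
  "cyl_local_extremum p1 p2 p3 v \<longleftrightarrow> v \<in> cyl_dirs p1 p2 p3 \<and>
     (\<exists>e>0. (\<forall>u \<in> cyl_dirs p1 p2 p3. dist u v < e \<longrightarrow> cyl_f p1 p2 p3 u \<le> cyl_f p1 p2 p3 v) \<or>
            (\<forall>u \<in> cyl_dirs p1 p2 p3. dist u v < e \<longrightarrow> cyl_f p1 p2 p3 v \<le> cyl_f p1 p2 p3 u))"

definition cyl_isolated_local_extremum :: "real^3 \<Rightarrow> real^3 \<Rightarrow> real^3 \<Rightarrow> real^3 \<Rightarrow> bool" where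
  "cyl_isolated_local_extremum p1 p2 p3 v \<longleftrightarrow> cyl_local_extremum p1 p2 p3 v \<and>
     (\<exists>e>0. \<forall>u. cyl_local_extremum p1 p2 p3 u \<and> dist u v < e \<longrightarrow> u = v)"

text \<open>Facet areas: facet i is opposite vertex p_i (p_0 = 0).\<close>
definition facet_area :: "real^3 \<Rightarrow> real^3 \<Rightarrow> real^3 \<Rightarrow> nat \<Rightarrow> real" where
  "facet_area p1 p2 p3 i =
     (if i = 0 then norm (cross3 (p2 - p1) (p3 - p1)) / 2
      else if i = 1 then norm (cross3 p2 p3) / 2
      else if i = 2 then norm (cross3 p1 p3) / 2
      else norm (cross3 p1 p2) / 2)"

definition linear_form :: "(real^3 \<Rightarrow> real) \<Rightarrow> bool" where
  "linear_form l \<longleftrightarrow> (\<exists>a. a \<noteq> 0 \<and> (\<forall>v. l v = a \<bullet> v))"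

definition quadratic_form :: "(real^3 \<Rightarrow> real) \<Rightarrow> bool" where
  "quadratic_form q \<longleftrightarrow> (\<exists>A::real^3^3. \<forall>v. q v = v \<bullet> (A *v v))"

definition irreducible_quadratic_form :: "(real^3 \<Rightarrow> real) \<Rightarrow> bool" where
  "irreducible_quadratic_form q \<longleftrightarrow> quadratic_form q \<and> (\<exists>v. q v \<noteq> 0) \<and>
     \<not> (\<exists>a b :: real^3. \<forall>v. q v = (a \<bullet> v) * (b \<bullet> v))"

end

theory Submission
  imports Defs "HOL-Computational_Algebra.Polynomial"
begin

text \<open>Equal areas of the facets in each pair force two pairs of opposite edges of \<open>T\<close> to have
  equal lengths. These are linear relations between the Gram entries \<open>pi \<bullet> pj\<close>, and with them
  \<open>g1\<close>, written in the coordinates of \<open>v\<close> with respect to \<open>p1, p2, p3\<close>, factors as a linear form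
  times a nondegenerate quadratic form. The constraint set \<open>g1 = g2 = 0\<close> is therefore a great
  circle together with a conic on the unit sphere. Each is covered, up to one antipodal pair of
  points that may be chosen at will, by a curve \<open>\<plusminus>c(s)/|c(s)|\<close> with \<open>c\<close> polynomial of degree
  \<open>k = 1\<close> resp. \<open>k = 2\<close>; choosing that pair away from the extrema, it suffices to count on the
  curve. There the homogeneous quartic \<open>f\<close> becomes \<open>P/Q\<^sup>2\<close> with \<open>deg P \<le> 4k\<close> and
  \<open>deg Q \<le> 2k\<close>, so its derivative has a numerator of degree at most \<open>6k - 2\<close>. Isolated extrema lie
  on its roots, the numerator cannot vanish identically (else \<open>f\<close> is constant along the curve
  and no extremum is isolated), and the two signs give at most \<open>2 \<cdot> 4 = 8\<close> extrema on the
  circle and \<open>2 \<cdot> 10 = 20\<close> on the conic.\<close>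

unbundle cross3_syntax

section \<open>Triple products\<close>

definition triple :: "real^3 \<Rightarrow> real^3 \<Rightarrow> real^3 \<Rightarrow> real" where
  "triple x y z = x \<bullet> (y \<times> z)"

lemma det_cyl_M: "det (cyl_M p1 p2 p3) = triple p1 p2 p3"
  unfolding cyl_M_def triple_def by (simp add: dot_cross_det)

lemma triple_eq_inner_cross: "triple x y z = (x \<times> y) \<bullet> z"
  unfolding triple_def by (simp add: cross3_simps forall_3)

lemma triple_cyclic: "triple y z x = triple x y z" "triple z x y = triple x y z"
  unfolding triple_def by (simp_all add: cross3_simps)

lemma triple_swap: "triple y x z = - triple x y z" "triple z y x = - triple x y z"
  "triple x z y = - triple x y z"
  unfolding triple_def by (simp_all add: cross3_simps)

lemma triple_repeat: "triple x y y = 0" "triple x y x = 0" "triple x x y = 0"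
  unfolding triple_def by (simp_all add: dot_cross_self)

lemma inner_cross_eq_triple: "(y \<times> z) \<bullet> x = triple x y z"
  unfolding triple_def by (simp add: inner_commute)

lemma triple_cross_self: "triple x (x \<times> y) y = - ((x \<times> y) \<bullet> (x \<times> y))"
  unfolding triple_def by (simp add: cross3_simps forall_3)

lemma triple_scaleR_eq_dual_expansion:
  "triple p1 p2 p3 *\<^sub>R x = (p1 \<bullet> x) *\<^sub>R (p2 \<times> p3) + (p2 \<bullet> x) *\<^sub>R (p3 \<times> p1) + (p3 \<bullet> x) *\<^sub>R (p1 \<times> p2)"
  unfolding triple_def by (simp add: cross3_simps forall_3)

lemma triple_scaleR_eq_expansion:
  "triple p1 p2 p3 *\<^sub>R x = triple x p2 p3 *\<^sub>R p1 + triple p1 x p3 *\<^sub>R p2 + triple p1 p2 x *\<^sub>R p3"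
  unfolding triple_def
  by (simp add: vec_eq_iff forall_3 cross3_def inner_vec_def sum_3 vector_def; algebra)

lemma triple_coordinates:
  assumes "triple p1 p2 p3 \<noteq> 0"
  shows "x = (triple x p2 p3 / triple p1 p2 p3) *\<^sub>R p1 + (triple p1 x p3 / triple p1 p2 p3) *\<^sub>R p2
    + (triple p1 p2 x / triple p1 p2 p3) *\<^sub>R p3"
proof -
  have "x = (1 / triple p1 p2 p3) *\<^sub>R (triple p1 p2 p3 *\<^sub>R x)" using assms by simp
  also have "\<dots> = (1 / triple p1 p2 p3) *\<^sub>R
      (triple x p2 p3 *\<^sub>R p1 + triple p1 x p3 *\<^sub>R p2 + triple p1 p2 x *\<^sub>R p3)"
    by (simp only: triple_scaleR_eq_expansion[of p1 p2 p3 x])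
  also have "\<dots> = (triple x p2 p3 / triple p1 p2 p3) *\<^sub>R p1 + (triple p1 x p3 / triple p1 p2 p3) *\<^sub>R p2
      + (triple p1 p2 x / triple p1 p2 p3) *\<^sub>R p3"
    by (simp add: scaleR_add_right)
  finally show ?thesis .
qed

lemma eq_0_if_orthogonal_to_basis:
  assumes "triple p1 p2 p3 \<noteq> 0" "x \<bullet> p1 = 0" "x \<bullet> p2 = 0" "x \<bullet> p3 = 0"
  shows "x = 0"
  using triple_scaleR_eq_dual_expansion[of p1 p2 p3 x] assms by (simp add: inner_commute)

lemma eq_0_if_triples_eq_0:
  assumes "triple p1 p2 p3 \<noteq> 0" "triple x p2 p3 = 0" "triple p1 x p3 = 0" "triple p1 p2 x = 0"
  shows "x = 0"
  using triple_scaleR_eq_expansion[of p1 p2 p3 x] assms by simp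

lemma cross_scaleR_eq_if_orthogonal:
  fixes x u w :: "real^3"
  assumes "x \<bullet> u = 0" "x \<bullet> w = 0"
  shows "((u \<times> w) \<bullet> (u \<times> w)) *\<^sub>R x = (x \<bullet> (u \<times> w)) *\<^sub>R (u \<times> w)"
proof -
  have "(u \<times> w) \<times> (x \<times> (u \<times> w)) = ((u \<times> w) \<bullet> (u \<times> w)) *\<^sub>R x - ((u \<times> w) \<bullet> x) *\<^sub>R (u \<times> w)"
    "x \<times> (u \<times> w) = (x \<bullet> w) *\<^sub>R u - (x \<bullet> u) *\<^sub>R w"
    by (simp_all add: cross3_simps forall_3)
  then show ?thesis using assms by (simp add: inner_commute)
qed

lemma exists_orthogonal_to_two:
  fixes a b :: "real^3"
  obtains k where "k \<noteq> 0" "a \<bullet> k = 0" "b \<bullet> k = 0"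
proof -
  have "dim {a, b} \<le> card {a, b}" by (rule dim_le_card') simp
  also have "\<dots> < DIM(real^3)" by (simp add: card_insert_if)
  finally obtain k where "k \<noteq> 0" "\<And>y. y \<in> span {a, b} \<Longrightarrow> orthogonal k y"
    by (rule orthogonal_to_subspace_exists) blast
  then show ?thesis using that by (simp add: orthogonal_def span_base inner_commute)
qed

lemma inner_transpose_mult: "x \<bullet> (transpose A *v y) = (A *v x) \<bullet> (y::real^'n)"
  by (metis dot_lmul_matrix inner_commute vector_transpose_matrix)

lemma cross_cross_triple: "(w \<times> x) \<times> (y \<times> z) = triple w x z *\<^sub>R y - triple w x y *\<^sub>R z"
  unfolding triple_def dot_cross_det by (rule cross_cross_det)

lemma norm_cross_commute: "norm (x \<times> y) = norm (y \<times> x)"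
  by (metis cross_skew norm_minus_cancel)

lemma scaleR_eq_imp_eq_scaleR_inverse: "r \<noteq> 0 \<Longrightarrow> r *\<^sub>R x = y \<Longrightarrow> x = (1 / r) *\<^sub>R y"
  for x y :: "'a::real_vector"
  by auto

lemma inner_sgn_self: "x \<noteq> 0 \<Longrightarrow> sgn x \<bullet> sgn x = (1::real)"
  for x :: "'a::real_inner"
  using power2_norm_eq_inner[of "sgn x"] by (simp add: norm_sgn)

lemma unit_eq_scaleR_imp_sgn:
  fixes v x :: "'a::real_normed_vector"
  assumes "norm v = 1" "v = l *\<^sub>R x"
  shows "v = sgn x \<or> v = - sgn x"
proof -
  have "v = sgn v" using assms(1) by (simp add: sgn_div_norm)
  also have "\<dots> = sgn l *\<^sub>R sgn x" using assms(2) by (simp add: sgn_scaleR)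
  finally show ?thesis using assms by (cases "l > 0") (auto simp: sgn_real_def)
qed

lemma unit_parallel_imp_eq_or_neg:
  fixes x y :: "real^3"
  assumes "x \<bullet> x = 1" "y \<bullet> y = 1" "x \<times> y = 0"
  shows "x = y \<or> x = - y"
proof -
  have "y \<times> (x \<times> y) = (y \<bullet> y) *\<^sub>R x - (y \<bullet> x) *\<^sub>R y" by (simp add: cross3_simps forall_3)
  then have "x = (y \<bullet> x) *\<^sub>R y" using assms by simp
  moreover have "sgn y = y" using assms(2) by (simp add: sgn_div_norm norm_eq_sqrt_inner)
  ultimately show ?thesis using unit_eq_scaleR_imp_sgn[of x "y \<bullet> x" y] assms(1)
    by (simp add: norm_eq_sqrt_inner)
qed

lemma exists_unit_orthogonal:
  fixes a :: "real^3"
  obtains w where "a \<bullet> w = 0" "w \<bullet> w = 1"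
proof -
  obtain k where "k \<noteq> 0" "a \<bullet> k = 0" by (rule exists_orthogonal_to_two[of a a])
  then show ?thesis using that[of "sgn k"] inner_sgn_self[of k] by (simp add: sgn_div_norm)
qed

section \<open>Closed forms of the cylinder data\<close>

definition cyl_w_entry :: "real^3 \<Rightarrow> real^3 \<Rightarrow> real" where
  "cyl_w_entry p v = (v \<bullet> v) * (p \<bullet> p) - (v \<bullet> p)^2"

lemma cyl_w_entry_scaleR: "cyl_w_entry p (t *\<^sub>R v) = t^2 * cyl_w_entry p v"
  unfolding cyl_w_entry_def by (simp add: algebra_simps power2_eq_square)

lemma cyl_M_mult_cyl_U:
  assumes "det (cyl_M p1 p2 p3) \<noteq> 0"
  shows "cyl_M p1 p2 p3 *v cyl_U p1 p2 p3 v = (1/2) *\<^sub>R cyl_w p1 p2 p3 v"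
proof -
  let ?M = "cyl_M p1 p2 p3"
  have "invertible ?M" using assms invertible_det_nz by blast
  then have "?M ** matrix_inv ?M = mat 1"
    unfolding matrix_inv_def invertible_def
    by (rule someI_ex[where P="\<lambda>A'. ?M ** A' = mat 1 \<and> A' ** ?M = mat 1", THEN conjunct1])
  then show ?thesis unfolding cyl_U_def
    by (simp add: matrix_vector_mult_scaleR matrix_vector_mul_assoc)
qed

lemma inner_cyl_U:
  assumes "det (cyl_M p1 p2 p3) \<noteq> 0"
  shows "p1 \<bullet> cyl_U p1 p2 p3 v = cyl_w_entry p1 v / 2"
    "p2 \<bullet> cyl_U p1 p2 p3 v = cyl_w_entry p2 v / 2"
    "p3 \<bullet> cyl_U p1 p2 p3 v = cyl_w_entry p3 v / 2"
proof -
  have "cyl_M p1 p2 p3 *v x = vector [p1 \<bullet> x, p2 \<bullet> x, p3 \<bullet> x]" for x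
    unfolding cyl_M_def
    by (simp add: vec_eq_iff matrix_vector_mult_def inner_vec_def sum_3 vector_def forall_3)
  then have "vector [p1 \<bullet> cyl_U p1 p2 p3 v, p2 \<bullet> cyl_U p1 p2 p3 v, p3 \<bullet> cyl_U p1 p2 p3 v]
      = (1/2) *\<^sub>R cyl_w p1 p2 p3 v"
    using cyl_M_mult_cyl_U[OF assms, of v] by simp
  then show "p1 \<bullet> cyl_U p1 p2 p3 v = cyl_w_entry p1 v / 2"
    "p2 \<bullet> cyl_U p1 p2 p3 v = cyl_w_entry p2 v / 2"
    "p3 \<bullet> cyl_U p1 p2 p3 v = cyl_w_entry p3 v / 2"
    unfolding cyl_w_def cyl_w_entry_def by (auto simp: vec_eq_iff forall_3 vector_def inner_commute)
qed

lemma cyl_U_eq: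
  assumes "det (cyl_M p1 p2 p3) \<noteq> 0"
  shows "cyl_U p1 p2 p3 v = (1 / (2 * triple p1 p2 p3)) *\<^sub>R
     (cyl_w_entry p1 v *\<^sub>R (p2 \<times> p3) + cyl_w_entry p2 v *\<^sub>R (p3 \<times> p1)
      + cyl_w_entry p3 v *\<^sub>R (p1 \<times> p2))"
proof -
  have "triple p1 p2 p3 \<noteq> 0" using assms det_cyl_M by simp
  then have "cyl_U p1 p2 p3 v = (1 / triple p1 p2 p3) *\<^sub>R (triple p1 p2 p3 *\<^sub>R cyl_U p1 p2 p3 v)"
    by simp
  also have "triple p1 p2 p3 *\<^sub>R cyl_U p1 p2 p3 v = (1/2) *\<^sub>R
      (cyl_w_entry p1 v *\<^sub>R (p2 \<times> p3) + cyl_w_entry p2 v *\<^sub>R (p3 \<times> p1)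
       + cyl_w_entry p3 v *\<^sub>R (p1 \<times> p2))"
    unfolding triple_scaleR_eq_dual_expansion inner_cyl_U[OF assms] by (simp add: algebra_simps)
  finally show ?thesis by simp
qed

lemma cyl_g1_eq:
  assumes "det (cyl_M p1 p2 p3) \<noteq> 0"
  shows "cyl_g1 p1 p2 p3 v = (cyl_w_entry p1 v * triple v p2 p3 + cyl_w_entry p2 v * triple p1 v p3
     + cyl_w_entry p3 v * triple p1 p2 v) / (2 * triple p1 p2 p3)"
  unfolding cyl_g1_def cyl_U_eq[OF assms]
  by (simp add: inner_add_left inner_cross_eq_triple triple_cyclic(1)[where x=p1 and y=v and z=p3]
      triple_cyclic(2)[where x=p1 and y=p2 and z=v])

lemma cyl_g1_swap12:
  assumes "det (cyl_M p1 p2 p3) \<noteq> 0"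
  shows "cyl_g1 p2 p1 p3 v = cyl_g1 p1 p2 p3 v"
proof -
  have "triple p1 p2 p3 \<noteq> 0" using assms by (simp add: det_cyl_M)
  moreover have det: "det (cyl_M p2 p1 p3) \<noteq> 0"
    using assms triple_swap(1)[of p2 p1 p3] by (simp add: det_cyl_M)
  ultimately show ?thesis
    unfolding cyl_g1_eq[OF assms] cyl_g1_eq[OF det]
    using triple_swap(1)[of p2 p1 p3] triple_swap(1)[of v p1 p3] triple_swap(1)[of p2 v p3]
      triple_swap(1)[of p2 p1 v]
    by (simp add: field_simps)
qed

lemma cyl_g1_swap13:
  assumes "det (cyl_M p1 p2 p3) \<noteq> 0"
  shows "cyl_g1 p3 p2 p1 v = cyl_g1 p1 p2 p3 v"
proof -
  have "triple p1 p2 p3 \<noteq> 0" using assms by (simp add: det_cyl_M)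
  moreover have det: "det (cyl_M p3 p2 p1) \<noteq> 0"
    using assms triple_swap(2)[of p3 p2 p1] by (simp add: det_cyl_M)
  ultimately show ?thesis
    unfolding cyl_g1_eq[OF assms] cyl_g1_eq[OF det]
    using triple_swap(2)[of p3 p2 p1] triple_swap(2)[of v p2 p1] triple_swap(2)[of p3 v p1]
      triple_swap(2)[of p3 p2 v]
    by (simp add: field_simps)
qed

lemma cyl_f_eq:
  assumes "det (cyl_M p1 p2 p3) \<noteq> 0"
  shows "cyl_f p1 p2 p3 v = (1 / (2 * triple p1 p2 p3))^2 *
    (cyl_w_entry p1 v * cyl_w_entry p1 v * ((p2 \<times> p3) \<bullet> (p2 \<times> p3))
     + cyl_w_entry p2 v * cyl_w_entry p2 v * ((p3 \<times> p1) \<bullet> (p3 \<times> p1))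
     + cyl_w_entry p3 v * cyl_w_entry p3 v * ((p1 \<times> p2) \<bullet> (p1 \<times> p2))
     + 2 * (cyl_w_entry p1 v * cyl_w_entry p2 v) * ((p2 \<times> p3) \<bullet> (p3 \<times> p1))
     + 2 * (cyl_w_entry p1 v * cyl_w_entry p3 v) * ((p2 \<times> p3) \<bullet> (p1 \<times> p2))
     + 2 * (cyl_w_entry p2 v * cyl_w_entry p3 v) * ((p3 \<times> p1) \<bullet> (p1 \<times> p2)))"
  unfolding cyl_f_def cyl_U_eq[OF assms]
  by (simp add: inner_add_left inner_add_right inner_commute power2_eq_square algebra_simps)

lemma cyl_f_scaleR:
  assumes "det (cyl_M p1 p2 p3) \<noteq> 0"
  shows "cyl_f p1 p2 p3 (t *\<^sub>R v) = t^4 * cyl_f p1 p2 p3 v"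
  unfolding cyl_f_eq[OF assms] cyl_w_entry_scaleR
  by (simp add: algebra_simps power2_eq_square power4_eq_xxxx)

section \<open>Polynomial functions\<close>

definition poly_curve :: "(3 \<Rightarrow> real poly) \<Rightarrow> real \<Rightarrow> real^3" where
  "poly_curve c s = (\<chi> i. poly (c i) s)"

text \<open>Polynomiality of a function on \<open>\<real>\<^sup>3\<close> is expressed through its restrictions: along every
  polynomial curve of degree at most \<open>k\<close> it must be a polynomial of degree at most \<open>d * k\<close>.
  This is the only property of polynomials the counting argument uses.\<close>

definition poly_function :: "nat \<Rightarrow> (real^3 \<Rightarrow> real) \<Rightarrow> bool" where
  "poly_function d h \<longleftrightarrow> (\<forall>c k. (\<forall>i. degree (c i) \<le> k) \<longrightarrow>
     (\<exists>P. degree P \<le> d * k \<and> (\<forall>s. poly P s = h (poly_curve c s))))"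

lemma poly_function_const: "poly_function 0 (\<lambda>v. r)"
  unfolding poly_function_def by (intro allI impI exI[of _ "[:r:]"]) auto

lemma poly_function_component: "poly_function 1 (\<lambda>v. v $ i)"
  unfolding poly_function_def poly_curve_def by (intro allI impI exI[of _ "c i" for c]) auto

lemma poly_function_add:
  assumes "poly_function d h1" "poly_function d h2"
  shows "poly_function d (\<lambda>v. h1 v + h2 v)"
  unfolding poly_function_def
proof (intro allI impI)
  fix c :: "3 \<Rightarrow> real poly" and k assume "\<forall>i. degree (c i) \<le> k"
  with assms obtain P1 P2 where "degree P1 \<le> d * k" "\<forall>s. poly P1 s = h1 (poly_curve c s)"
    "degree P2 \<le> d * k" "\<forall>s. poly P2 s = h2 (poly_curve c s)"
    unfolding poly_function_def by meson
  then show "\<exists>P. degree P \<le> d * k \<and> (\<forall>s. poly P s = h1 (poly_curve c s) + h2 (poly_curve c s))"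
    by (intro exI[of _ "P1 + P2"]) (auto intro: degree_add_le)
qed

lemma poly_function_mult:
  assumes "poly_function d1 h1" "poly_function d2 h2" "d1 + d2 \<le> d"
  shows "poly_function d (\<lambda>v. h1 v * h2 v)"
  unfolding poly_function_def
proof (intro allI impI)
  fix c :: "3 \<Rightarrow> real poly" and k assume "\<forall>i. degree (c i) \<le> k"
  with assms obtain P1 P2 where "degree P1 \<le> d1 * k" "\<forall>s. poly P1 s = h1 (poly_curve c s)"
    "degree P2 \<le> d2 * k" "\<forall>s. poly P2 s = h2 (poly_curve c s)"
    unfolding poly_function_def by meson
  moreover have "d1 * k + d2 * k \<le> d * k" using assms(3) by (metis add_mult_distrib mult_le_mono1)
  ultimately show "\<exists>P. degree P \<le> d * k \<and> (\<forall>s. poly P s = h1 (poly_curve c s) * h2 (poly_curve c s))"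
    by (intro exI[of _ "P1 * P2"]) (auto intro: order.trans[OF degree_mult_le])
qed

lemma poly_function_scale: "poly_function d h \<Longrightarrow> poly_function d (\<lambda>v. r * h v)"
  using poly_function_mult[OF poly_function_const, of d h d r] by simp

lemma poly_function_diff:
  "poly_function d h1 \<Longrightarrow> poly_function d h2 \<Longrightarrow> poly_function d (\<lambda>v. h1 v - h2 v)"
  using poly_function_add[OF _ poly_function_scale[of d h2 "-1"]] by simp

lemma poly_function_inner: "poly_function 1 (\<lambda>v. b \<bullet> v)"
proof -
  have "(\<lambda>v::real^3. b \<bullet> v) = (\<lambda>v. (b$1 * v$1 + b$2 * v$2) + b$3 * v$3)"
    by (simp add: inner_vec_def sum_3)
  then show ?thesis by (simp only:) (intro poly_function_add poly_function_scale poly_function_component)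
qed

lemma poly_function_cyl_w_entry: "poly_function 2 (cyl_w_entry p)"
proof -
  have "cyl_w_entry p = (\<lambda>v. (p \<bullet> p) * (\<Sum>i\<in>UNIV. v$i * v$i) - (p \<bullet> v) * (p \<bullet> v))"
    by (auto simp: cyl_w_entry_def power2_eq_square inner_commute inner_vec_def)
  moreover have "poly_function 2 (\<lambda>v::real^3. \<Sum>i\<in>UNIV. v$i * v$i)"
    unfolding sum_3
    by (intro poly_function_add poly_function_mult[OF poly_function_component poly_function_component])
      auto
  ultimately show ?thesis
    by (simp only:) (intro poly_function_diff poly_function_scale
        poly_function_mult[OF poly_function_inner poly_function_inner], auto)
qed

lemma poly_function_cyl_f:
  assumes "det (cyl_M p1 p2 p3) \<noteq> 0"
  shows "poly_function 4 (cyl_f p1 p2 p3)"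
proof -
  have "poly_function 4 (\<lambda>v. cyl_w_entry pi v * cyl_w_entry pj v)" for pi pj
    by (rule poly_function_mult[OF poly_function_cyl_w_entry poly_function_cyl_w_entry]) simp
  then show ?thesis
    unfolding cyl_f_eq[OF assms, abs_def]
    by (intro poly_function_scale poly_function_add poly_function_mult[OF _ poly_function_const])
      (auto intro: poly_function_scale)
qed

section \<open>Nondegenerate quadratic forms\<close>

locale nondeg_qform =
  fixes S :: "real^3^3"
  assumes symmetric: "transpose S = S" and invertible: "invertible S"
begin

lemma injective: "S *v k = 0 \<Longrightarrow> k = 0"
  using invertible by (metis invertible_left_inverse matrix_left_invertible_ker)

definition bf :: "real^3 \<Rightarrow> real^3 \<Rightarrow> real" where "bf u v = u \<bullet> (S *v v)"

abbreviation qf :: "real^3 \<Rightarrow> real" where "qf v \<equiv> bf v v"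

lemma bf_commute: "bf u v = bf v u"
proof -
  have "u \<bullet> (S *v v) = u \<bullet> (transpose S *v v)" using symmetric by simp
  also have "\<dots> = (S *v u) \<bullet> v" by (rule inner_transpose_mult)
  finally show ?thesis unfolding bf_def by (simp add: inner_commute)
qed

lemma bf_add_left: "bf (x + y) z = bf x z + bf y z"
  and bf_add_right: "bf z (x + y) = bf z x + bf z y"
  and bf_scaleR_left: "bf (t *\<^sub>R x) z = t * bf x z"
  and bf_scaleR_right: "bf z (t *\<^sub>R x) = t * bf z x"
  and bf_diff_left: "bf (x - y) z = bf x z - bf y z"
  and bf_diff_right: "bf z (x - y) = bf z x - bf z y"
  unfolding bf_def
  by (simp_all add: inner_add_left inner_add_right inner_diff_left inner_diff_right
      matrix_vector_right_distrib matrix_vector_mult_scaleR matrix_vector_mult_diff_distrib)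

lemma bf_minus_left: "bf (- x) z = - bf x z"
  and bf_minus_right: "bf z (- x) = - bf z x"
  using bf_scaleR_left[of "-1"] bf_scaleR_right[of _ "-1"] by simp_all

lemmas bf_simps = bf_add_left bf_add_right bf_scaleR_left bf_scaleR_right bf_minus_left
  bf_minus_right bf_diff_left bf_diff_right

lemma qf_linear_combination:
  "qf (a *\<^sub>R x + b *\<^sub>R y) = a^2 * qf x + 2 * a * b * bf x y + b^2 * qf y"
  by (simp add: bf_simps bf_commute[of y x] power2_eq_square algebra_simps)

lemma qf_continuous: "continuous_on UNIV qf"
  unfolding bf_def
  by (intro continuous_intros bounded_linear.continuous_on[OF matrix_vector_mul_bounded_linear])

lemma eq_0_if_bf_eq_0: "(\<And>v. bf k v = 0) \<Longrightarrow> k = 0"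
  using bf_commute[of k "S *v k"] by (metis bf_def inner_eq_zero_iff injective)

lemma isotropic_orthogonal_imp_parallel:
  assumes "qf u = 0" "qf w = 0" "bf u w = 0"
  shows "u \<times> w = 0"
proof (rule ccontr)
  define n where "n = u \<times> w"
  assume "u \<times> w \<noteq> 0"
  then have nn: "n \<bullet> n \<noteq> 0" unfolding n_def by simp
  have "S *v x = (((S *v x) \<bullet> n) / (n \<bullet> n)) *\<^sub>R n" if "x = u \<or> x = w" for x
  proof -
    have "(n \<bullet> n) *\<^sub>R (S *v x) = ((S *v x) \<bullet> n) *\<^sub>R n"
      unfolding n_def using that assms bf_commute
      by (intro cross_scaleR_eq_if_orthogonal) (auto simp: bf_def inner_commute)
    then have "(1 / (n \<bullet> n)) *\<^sub>R ((n \<bullet> n) *\<^sub>R (S *v x)) = (1 / (n \<bullet> n)) *\<^sub>R (((S *v x) \<bullet> n) *\<^sub>R n)"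
      by simp
    then show ?thesis using nn by simp
  qed
  then obtain lu lw where Su: "S *v u = lu *\<^sub>R n" and Sw: "S *v w = lw *\<^sub>R n" by blast
  have "S *v (lw *\<^sub>R u - lu *\<^sub>R w) = 0"
    by (simp add: matrix_vector_mult_diff_distrib matrix_vector_mult_scaleR Su Sw)
  then have z: "lw *\<^sub>R u - lu *\<^sub>R w = 0" using injective by blast
  have "(lw *\<^sub>R u - lu *\<^sub>R w) \<times> w = lw *\<^sub>R n" "u \<times> (lw *\<^sub>R u - lu *\<^sub>R w) = - lu *\<^sub>R n"
    unfolding n_def by (simp_all add: cross3_simps forall_3)
  then have "lw = 0" "lu = 0" using z nn by auto
  then have "u = 0" using Su injective by simp
  then show False using \<open>u \<times> w \<noteq> 0\<close> by simp
qed

lemma irreducible_quadratic_form_qf: "irreducible_quadratic_form qf"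
proof -
  have not_product: False if prod: "\<And>v. qf v = (a \<bullet> v) * (b \<bullet> v)" for a b
  proof -
    obtain k where k: "k \<noteq> 0" "a \<bullet> k = 0" "b \<bullet> k = 0" by (rule exists_orthogonal_to_two)
    have "bf k v = 0" for v
      using qf_linear_combination[of 1 k 1 v] prod[of k] prod[of v] prod[of "k + v"] k
      by (simp add: inner_add_right)
    then show False using eq_0_if_bf_eq_0 k(1) by blast
  qed
  show ?thesis unfolding irreducible_quadratic_form_def quadratic_form_def
  proof (intro conjI)
    show "\<exists>A. \<forall>v. qf v = v \<bullet> (A *v v)" unfolding bf_def by blast
    show "\<exists>v. qf v \<noteq> 0" using not_product[of 0 0] by auto
    show "\<not> (\<exists>a b. \<forall>v. qf v = (a \<bullet> v) * (b \<bullet> v))" using not_product by blast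
  qed
qed

end

lemma nondeg_qform_congruent:
  assumes "nondeg_qform C" "invertible P"
  shows "nondeg_qform (transpose P ** C ** P)"
proof
  interpret C: nondeg_qform C by fact
  show "transpose (transpose P ** C ** P) = transpose P ** C ** P"
    by (simp add: matrix_transpose_mul matrix_mul_assoc C.symmetric)
  show "invertible (transpose P ** C ** P)"
    by (intro invertible_mult transpose_invertible C.invertible assms(2))
qed

section \<open>Factorisation of the cubic\<close>

lemma opposite_edges_eq_if_facet_areas_eq:
  assumes "triple p1 p2 p3 \<noteq> 0"
    and "norm ((p2 - p1) \<times> (p3 - p1)) = norm (p2 \<times> p3)" "norm (p1 \<times> p3) = norm (p1 \<times> p2)"
  shows "p2 \<bullet> p2 = (p1 - p3) \<bullet> (p1 - p3)" "p3 \<bullet> p3 = (p2 - p1) \<bullet> (p2 - p1)"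
proof -
  define X Y Z where "X = p2 \<times> p3" and "Y = p3 \<times> p1" and "Z = p1 \<times> p2"
  define d where "d = triple p1 p2 p3"
  have "(p2 - p1) \<times> (p3 - p1) = X + Y + Z" "p1 \<times> p3 = - Y"
    unfolding X_def Y_def Z_def by (simp_all add: cross3_simps forall_3)
  then have "norm (X + Y + Z) = norm X" "norm Y = norm Z"
    using assms(2,3) unfolding X_def[symmetric] Z_def[symmetric] by simp_all
  then have "(X + Y + Z) \<bullet> (X + Y + Z) = X \<bullet> X" "Y \<bullet> Y = Z \<bullet> Z"
    by (simp_all add: norm_eq)
  then have sum0: "Y \<bullet> Y + Z \<bullet> Z + 2 * (X \<bullet> Y) + 2 * (Y \<bullet> Z) + 2 * (Z \<bullet> X) = 0"
    and YZ: "Y \<bullet> Y = Z \<bullet> Z"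
    by (simp_all add: inner_add_left inner_add_right inner_commute)
  have "(Z \<times> X) \<bullet> (Z \<times> X) = (Y \<times> (X + Z)) \<bullet> (Y \<times> (X + Z))"
    "(X \<times> Y) \<bullet> (X \<times> Y) = (Z \<times> (X + Y)) \<bullet> (Z \<times> (X + Y))"
    unfolding dot_cross using sum0 YZ
    by (simp_all add: inner_add_left inner_add_right inner_commute power2_eq_square algebra_simps,
        algebra+)
  moreover have "Z \<times> X = d *\<^sub>R p2" "Y \<times> (X + Z) = d *\<^sub>R (p1 - p3)"
    "X \<times> Y = d *\<^sub>R p3" "Z \<times> (X + Y) = d *\<^sub>R (p2 - p1)"
    unfolding X_def Y_def Z_def d_def cross_add_right cross_cross_triple
    by (simp_all add: triple_repeat triple_cyclic algebra_simps)
  ultimately have "(d * d) * (p2 \<bullet> p2) = (d * d) * ((p1 - p3) \<bullet> (p1 - p3))"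
    "(d * d) * (p3 \<bullet> p3) = (d * d) * ((p2 - p1) \<bullet> (p2 - p1))"
    by (simp_all add: algebra_simps)
  then show "p2 \<bullet> p2 = (p1 - p3) \<bullet> (p1 - p3)" "p3 \<bullet> p3 = (p2 - p1) \<bullet> (p2 - p1)"
    using assms(1) d_def by simp_all
qed

text \<open>In the coordinates \<open>v = n1 p1 + n2 p2 + n3 p3\<close>, with Gram entries \<open>gij = pi \<bullet> pj\<close>,
  \<open>2 g1(v) = \<Sum>i. ni (|v|\<^sup>2 gii - (v \<bullet> pi)\<^sup>2)\<close>; the two Gram relations below are the
  edge relations of \<open>opposite_edges_eq_if_facet_areas_eq\<close>.\<close>

lemma g1_coordinate_factorization:
  fixes n1 n2 n3 g11 g12 g13 g22 g23 g33 :: real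
  assumes "g11 = g12 + g13" "g22 = g33 + g12 - g13"
  defines "vv \<equiv> n1*n1*g11 + n2*n2*g22 + n3*n3*g33 + 2*n1*n2*g12 + 2*n1*n3*g13 + 2*n2*n3*g23"
  shows "n1 * (vv * g11 - (n1*g11 + n2*g12 + n3*g13)^2)
       + n2 * (vv * g22 - (n1*g12 + n2*g22 + n3*g23)^2)
       + n3 * (vv * g33 - (n1*g13 + n2*g23 + n3*g33)^2)
     = (n2 + n3) * ((g11*g33 - g13^2) * n1 * (n1 + n2 + n3) + (g22*g33 - g23^2) * n2 * n3)"
  unfolding vv_def assms(1,2) by algebra

lemma cyl_g1_in_coordinates:
  assumes "triple p1 p2 p3 \<noteq> 0"
    and "p2 \<bullet> p2 = (p1 - p3) \<bullet> (p1 - p3)" "p3 \<bullet> p3 = (p2 - p1) \<bullet> (p2 - p1)"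
  shows "cyl_g1 p1 p2 p3 (n1 *\<^sub>R p1 + n2 *\<^sub>R p2 + n3 *\<^sub>R p3) = (n2 + n3) *
     ((norm (p1 \<times> p3))^2 * n1 * (n1 + n2 + n3) + (norm (p2 \<times> p3))^2 * n2 * n3) / 2"
proof -
  define v where "v = n1 *\<^sub>R p1 + n2 *\<^sub>R p2 + n3 *\<^sub>R p3"
  have "det (cyl_M p1 p2 p3) \<noteq> 0" using assms(1) by (simp add: det_cyl_M)
  moreover have "triple v p2 p3 = n1 * triple p1 p2 p3" "triple p1 v p3 = n2 * triple p1 p2 p3"
    "triple p1 p2 v = n3 * triple p1 p2 p3"
    unfolding v_def triple_def
    by (simp_all add: inner_add_left cross_add_left cross_add_right cross_mult_left cross_mult_right
        inner_add_right dot_cross_self cross_refl)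
  ultimately have g: "cyl_g1 p1 p2 p3 v = (n1 * cyl_w_entry p1 v + n2 * cyl_w_entry p2 v + n3 * cyl_w_entry p3 v) / 2"
    using assms(1) by (simp add: cyl_g1_eq field_simps)
  have r: "p1 \<bullet> p1 = p1 \<bullet> p2 + p1 \<bullet> p3" "p2 \<bullet> p2 = p3 \<bullet> p3 + p1 \<bullet> p2 - p1 \<bullet> p3"
    using assms(2,3) by (simp_all add: inner_diff_left inner_diff_right inner_commute)
  have "v \<bullet> v = n1*n1*(p1 \<bullet> p1) + n2*n2*(p2 \<bullet> p2) + n3*n3*(p3 \<bullet> p3)
      + 2*n1*n2*(p1 \<bullet> p2) + 2*n1*n3*(p1 \<bullet> p3) + 2*n2*n3*(p2 \<bullet> p3)"
    "v \<bullet> p1 = n1*(p1 \<bullet> p1) + n2*(p1 \<bullet> p2) + n3*(p1 \<bullet> p3)"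
    "v \<bullet> p2 = n1*(p1 \<bullet> p2) + n2*(p2 \<bullet> p2) + n3*(p2 \<bullet> p3)"
    "v \<bullet> p3 = n1*(p1 \<bullet> p3) + n2*(p2 \<bullet> p3) + n3*(p3 \<bullet> p3)"
    unfolding v_def by (simp_all add: inner_add_left inner_add_right inner_commute algebra_simps)
  then have "n1 * cyl_w_entry p1 v + n2 * cyl_w_entry p2 v + n3 * cyl_w_entry p3 v
      = (n2 + n3) * (((p1 \<bullet> p1)*(p3 \<bullet> p3) - (p1 \<bullet> p3)^2) * n1 * (n1 + n2 + n3)
                     + ((p2 \<bullet> p2)*(p3 \<bullet> p3) - (p2 \<bullet> p3)^2) * n2 * n3)"
    unfolding cyl_w_entry_def by (simp only:) (rule g1_coordinate_factorization[OF r])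
  then show ?thesis
    unfolding g v_def[symmetric] norm_cross by (simp add: power2_norm_eq_inner)
qed

definition dual_basis_matrix :: "real^3 \<Rightarrow> real^3 \<Rightarrow> real^3 \<Rightarrow> real^3^3" where
  "dual_basis_matrix p1 p2 p3 = (1 / triple p1 p2 p3) *\<^sub>R vector [p2 \<times> p3, p3 \<times> p1, p1 \<times> p2]"

lemma dual_basis_matrix_mult:
  "dual_basis_matrix p1 p2 p3 *v v = (1 / triple p1 p2 p3) *\<^sub>R vector [triple v p2 p3, triple p1 v p3, triple p1 p2 v]"
  unfolding dual_basis_matrix_def
  by (simp add: vec_eq_iff forall_3 matrix_vector_mul_component inner_cross_eq_triple
      triple_cyclic(1)[where x=p1 and y=v and z=p3] triple_cyclic(2)[where x=p1 and y=p2 and z=v])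

lemma invertible_dual_basis_matrix:
  assumes "triple p1 p2 p3 \<noteq> 0"
  shows "invertible (dual_basis_matrix p1 p2 p3)"
proof -
  have "k = 0" if "dual_basis_matrix p1 p2 p3 *v k = 0" for k
    using that assms unfolding dual_basis_matrix_mult
    by (intro eq_0_if_triples_eq_0[OF assms]) (simp_all add: vec_eq_iff forall_3)
  then show ?thesis by (metis invertible_left_inverse matrix_left_invertible_ker)
qed

definition quadric_factor_matrix :: "real \<Rightarrow> real \<Rightarrow> real^3^3" where
  "quadric_factor_matrix K1 K2 =
     vector [vector [K1/2, K1/4, K1/4], vector [K1/4, 0, K2/4], vector [K1/4, K2/4, 0]]"

lemma quadric_factor_matrix_qform:
  "n \<bullet> (quadric_factor_matrix K1 K2 *v n) = (K1 * n$1 * (n$1 + n$2 + n$3) + K2 * n$2 * n$3) / 2"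
  unfolding quadric_factor_matrix_def
  by (simp add: matrix_vector_mult_def inner_vec_def sum_3 algebra_simps)

lemma nondeg_qform_quadric_factor_matrix:
  assumes "K1 \<noteq> 0" "K2 \<noteq> 0" "K1 \<noteq> K2"
  shows "nondeg_qform (quadric_factor_matrix K1 K2)"
proof
  show "transpose (quadric_factor_matrix K1 K2) = quadric_factor_matrix K1 K2"
    unfolding quadric_factor_matrix_def by (simp add: vec_eq_iff forall_3 transpose_def vector_def)
  have det: "det (quadric_factor_matrix K1 K2) = K1 * K2 * (K1 - K2) / 32"
    unfolding quadric_factor_matrix_def by (simp add: det_3 vector_def algebra_simps)
  show "invertible (quadric_factor_matrix K1 K2)" unfolding invertible_det_nz det using assms by simp
qed

lemma cyl_g1_eq_linear_times_qform:
  assumes D: "triple p1 p2 p3 \<noteq> 0"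
    and edges: "p2 \<bullet> p2 = (p1 - p3) \<bullet> (p1 - p3)" "p3 \<bullet> p3 = (p2 - p1) \<bullet> (p2 - p1)"
    and ne: "norm (p1 \<times> p3) \<noteq> norm (p2 \<times> p3)"
  obtains a S where "a \<noteq> 0" "nondeg_qform S" "\<And>v. cyl_g1 p1 p2 p3 v = (a \<bullet> v) * (v \<bullet> (S *v v))"
proof -
  define K1 where "K1 = (norm (p1 \<times> p3))^2"
  define K2 where "K2 = (norm (p2 \<times> p3))^2"
  have "p1 \<times> p3 \<noteq> 0" "p2 \<times> p3 \<noteq> 0"
    using D triple_swap(1)[of p2 p1 p3] unfolding triple_def by auto
  then have K: "K1 \<noteq> 0" "K2 \<noteq> 0" "K1 \<noteq> K2"
    using ne unfolding K1_def K2_def by (auto simp: power2_eq_iff_nonneg)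
  define P where "P = dual_basis_matrix p1 p2 p3"
  define C where "C = quadric_factor_matrix K1 K2"
  define S where "S = transpose P ** C ** P"
  define a where "a = transpose P *v vector [0, 1, 1]"
  have coordinates: "v = (P *v v)$1 *\<^sub>R p1 + (P *v v)$2 *\<^sub>R p2 + (P *v v)$3 *\<^sub>R p3" for v
    unfolding P_def dual_basis_matrix_mult using triple_coordinates[OF D] by simp
  have a: "a \<bullet> v = (P *v v)$2 + (P *v v)$3" for v
  proof -
    have "a \<bullet> v = v \<bullet> (transpose P *v vector [0, 1, 1])" by (simp add: a_def inner_commute)
    also have "\<dots> = (P *v v) \<bullet> vector [0, 1, 1]" by (rule inner_transpose_mult)
    finally show ?thesis by (simp add: inner_vec_def sum_3)
  qed
  have S: "v \<bullet> (S *v v) = (K1 * (P *v v)$1 * ((P *v v)$1 + (P *v v)$2 + (P *v v)$3)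
      + K2 * (P *v v)$2 * (P *v v)$3) / 2" for v
  proof -
    have "v \<bullet> (S *v v) = (P *v v) \<bullet> (C *v (P *v v))"
      unfolding S_def matrix_vector_mul_assoc[symmetric] inner_transpose_mult ..
    then show ?thesis unfolding C_def quadric_factor_matrix_qform .
  qed
  have "cyl_g1 p1 p2 p3 v = (a \<bullet> v) * (v \<bullet> (S *v v))" for v
    using cyl_g1_in_coordinates[OF D edges, of "(P *v v)$1" "(P *v v)$2" "(P *v v)$3"]
    unfolding coordinates[of v, symmetric] a S K1_def[symmetric] K2_def[symmetric] by simp
  moreover have "a \<noteq> 0"
    using a[of p2] D unfolding P_def dual_basis_matrix_mult by (auto simp: triple_repeat)
  moreover have "nondeg_qform S"
    unfolding S_def C_def P_def
    by (rule nondeg_qform_congruent[OF nondeg_qform_quadric_factor_matrix[OF K]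
          invertible_dual_basis_matrix[OF D]])
  ultimately show ?thesis using that by blast
qed

lemma paired_values_cases:
  fixes F :: "nat \<Rightarrow> real"
  assumes "\<exists>a b c d. {a, b, c, d} = {0, 1, 2, 3 :: nat} \<and> card {a, b, c, d} = 4 \<and>
                 F a = F b \<and> F c = F d \<and> F a \<noteq> F c"
  shows "(F 0 = F 1 \<and> F 2 = F 3 \<and> F 0 \<noteq> F 2) \<or> (F 0 = F 2 \<and> F 1 = F 3 \<and> F 0 \<noteq> F 1) \<or>
         (F 0 = F 3 \<and> F 1 = F 2 \<and> F 0 \<noteq> F 1)"
proof -
  obtain a b c d where abcd: "{a, b, c, d} = {0, 1, 2, 3 :: nat}" "card {a, b, c, d} = 4"
    and F: "F a = F b" "F c = F d" "F a \<noteq> F c"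
    using assms by blast
  have "distinct [a, b, c, d]" using abcd(2) by (intro card_distinct) simp
  then have "a \<noteq> b" "a \<noteq> c" "a \<noteq> d" "b \<noteq> c" "b \<noteq> d" "c \<noteq> d" by auto
  moreover have "a \<in> {0, 1, 2, 3}" "b \<in> {0, 1, 2, 3}" "c \<in> {0, 1, 2, 3}" "d \<in> {0, 1, 2, 3}"
    using abcd(1) by blast+
  then have "a = 0 \<or> a = 1 \<or> a = 2 \<or> a = 3" "b = 0 \<or> b = 1 \<or> b = 2 \<or> b = 3"
    "c = 0 \<or> c = 1 \<or> c = 2 \<or> c = 3" "d = 0 \<or> d = 1 \<or> d = 2 \<or> d = 3" by auto
  ultimately show ?thesis using F by (elim disjE) simp_all
qed

lemma cyl_g1_factors_if_facet_areas_eq: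
  assumes "triple p1 p2 p3 \<noteq> 0"
    and "norm ((p2 - p1) \<times> (p3 - p1)) = norm (p2 \<times> p3)" "norm (p1 \<times> p3) = norm (p1 \<times> p2)"
    and "norm (p1 \<times> p3) \<noteq> norm (p2 \<times> p3)"
  obtains a S where "a \<noteq> 0" "nondeg_qform S" "\<And>v. cyl_g1 p1 p2 p3 v = (a \<bullet> v) * (v \<bullet> (S *v v))"
  using cyl_g1_eq_linear_times_qform[OF assms(1) opposite_edges_eq_if_facet_areas_eq[OF assms(1-3)]
      assms(4)] by blast

lemma cyl_g1_factors:
  assumes simplex: "det (cyl_M p1 p2 p3) \<noteq> 0"
    and areas: "\<exists>a b c d. {a, b, c, d} = {0, 1, 2, 3 :: nat} \<and> card {a, b, c, d} = 4 \<and>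
                 facet_area p1 p2 p3 a = facet_area p1 p2 p3 b \<and>
                 facet_area p1 p2 p3 c = facet_area p1 p2 p3 d \<and>
                 facet_area p1 p2 p3 a \<noteq> facet_area p1 p2 p3 c"
  obtains a S where "a \<noteq> 0" "nondeg_qform S" "\<And>v. cyl_g1 p1 p2 p3 v = (a \<bullet> v) * (v \<bullet> (S *v v))"
proof -
  have D: "triple p1 p2 p3 \<noteq> 0" using simplex by (simp add: det_cyl_M)
  have "(p1 - p2) \<times> (p3 - p2) = - ((p2 - p1) \<times> (p3 - p1))"
    "(p2 - p3) \<times> (p1 - p3) = - ((p2 - p1) \<times> (p3 - p1))"
    by (simp_all add: cross3_simps forall_3)
  then have edge_facets: "norm ((p1 - p2) \<times> (p3 - p2)) = norm ((p2 - p1) \<times> (p3 - p1))"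
    "norm ((p2 - p3) \<times> (p1 - p3)) = norm ((p2 - p1) \<times> (p3 - p1))"
    by (metis norm_minus_cancel)+
  from paired_values_cases[OF areas] show ?thesis
  proof (elim disjE conjE)
    assume "facet_area p1 p2 p3 0 = facet_area p1 p2 p3 1" "facet_area p1 p2 p3 2 = facet_area p1 p2 p3 3"
      "facet_area p1 p2 p3 0 \<noteq> facet_area p1 p2 p3 2"
    then have "norm ((p2 - p1) \<times> (p3 - p1)) = norm (p2 \<times> p3)" "norm (p1 \<times> p3) = norm (p1 \<times> p2)"
      "norm (p1 \<times> p3) \<noteq> norm (p2 \<times> p3)"
      by (auto simp: facet_area_def)
    then show ?thesis using cyl_g1_factors_if_facet_areas_eq[OF D] that by blast
  next
    assume "facet_area p1 p2 p3 0 = facet_area p1 p2 p3 2" "facet_area p1 p2 p3 1 = facet_area p1 p2 p3 3"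
      "facet_area p1 p2 p3 0 \<noteq> facet_area p1 p2 p3 1"
    then have "norm ((p1 - p2) \<times> (p3 - p2)) = norm (p1 \<times> p3)" "norm (p2 \<times> p3) = norm (p2 \<times> p1)"
      "norm (p2 \<times> p3) \<noteq> norm (p1 \<times> p3)"
      using edge_facets norm_cross_commute[of p2 p1] by (auto simp: facet_area_def)
    moreover have "triple p2 p1 p3 \<noteq> 0" using D triple_swap(1)[of p2 p1 p3] by simp
    ultimately show ?thesis
      using cyl_g1_factors_if_facet_areas_eq[of p2 p1 p3] cyl_g1_swap12[OF simplex] that by metis
  next
    assume "facet_area p1 p2 p3 0 = facet_area p1 p2 p3 3" "facet_area p1 p2 p3 1 = facet_area p1 p2 p3 2"
      "facet_area p1 p2 p3 0 \<noteq> facet_area p1 p2 p3 1"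
    then have "norm ((p2 - p3) \<times> (p1 - p3)) = norm (p2 \<times> p1)" "norm (p3 \<times> p1) = norm (p3 \<times> p2)"
      "norm (p3 \<times> p1) \<noteq> norm (p2 \<times> p1)"
      using edge_facets norm_cross_commute[of p2 p1] norm_cross_commute[of p3 p1]
        norm_cross_commute[of p3 p2] by (auto simp: facet_area_def)
    moreover have "triple p3 p2 p1 \<noteq> 0" using D triple_swap(2)[of p3 p2 p1] by simp
    ultimately show ?thesis
      using cyl_g1_factors_if_facet_areas_eq[of p3 p2 p1] cyl_g1_swap13[OF simplex] that by metis
  qed
qed

section \<open>Local extrema along curves\<close>

definition local_extremum_on :: "('a::metric_space \<Rightarrow> real) \<Rightarrow> 'a set \<Rightarrow> 'a \<Rightarrow> bool" where
  "local_extremum_on f X v \<longleftrightarrow> v \<in> X \<and>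
     (\<exists>e>0. (\<forall>u\<in>X. dist u v < e \<longrightarrow> f u \<le> f v) \<or> (\<forall>u\<in>X. dist u v < e \<longrightarrow> f v \<le> f u))"

definition isolated_local_extremum_on :: "('a::metric_space \<Rightarrow> real) \<Rightarrow> 'a set \<Rightarrow> 'a \<Rightarrow> bool" where
  "isolated_local_extremum_on f X v \<longleftrightarrow> local_extremum_on f X v \<and>
     (\<exists>e>0. \<forall>u. local_extremum_on f X u \<and> dist u v < e \<longrightarrow> u = v)"

lemma local_extremum_on_curve_imp_deriv_eq_0:
  fixes \<gamma> :: "real \<Rightarrow> 'a::metric_space"
  assumes "local_extremum_on f X (\<gamma> s0)" "isCont \<gamma> s0" "\<And>s. \<gamma> s \<in> X"
    and "((\<lambda>s. f (\<gamma> s)) has_real_derivative D) (at s0)"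
  shows "D = 0"
proof -
  obtain e where "e > 0" and ext: "(\<forall>u\<in>X. dist u (\<gamma> s0) < e \<longrightarrow> f u \<le> f (\<gamma> s0)) \<or>
      (\<forall>u\<in>X. dist u (\<gamma> s0) < e \<longrightarrow> f (\<gamma> s0) \<le> f u)"
    using assms(1) unfolding local_extremum_on_def by blast
  then obtain d where "d > 0" and near: "\<And>s. \<bar>s0 - s\<bar> < d \<Longrightarrow> dist (\<gamma> s) (\<gamma> s0) < e"
    using assms(2) unfolding continuous_at_eps_delta by (metis dist_commute dist_real_def)
  from ext show ?thesis
  proof
    assume "\<forall>u\<in>X. dist u (\<gamma> s0) < e \<longrightarrow> f u \<le> f (\<gamma> s0)"
    then have "\<forall>s. \<bar>s0 - s\<bar> < d \<longrightarrow> f (\<gamma> s) \<le> f (\<gamma> s0)" using near assms(3) by blast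
    with assms(4) \<open>d > 0\<close> show "D = 0" by (rule DERIV_local_max)
  next
    assume "\<forall>u\<in>X. dist u (\<gamma> s0) < e \<longrightarrow> f (\<gamma> s0) \<le> f u"
    then have "\<forall>s. \<bar>s0 - s\<bar> < d \<longrightarrow> f (\<gamma> s0) \<le> f (\<gamma> s)" using near assms(3) by blast
    with assms(4) \<open>d > 0\<close> show "D = 0" by (rule DERIV_local_min)
  qed
qed

text \<open>If \<open>f\<close> is constant on a curve that makes up \<open>X\<close> away from a closed set \<open>Y\<close>, then every
  point of the curve off \<open>Y\<close> is a (non-strict) local extremum, so no point of the curve is an
  isolated one.\<close>

lemma not_isolated_local_extremum_on_constant_curve:
  fixes \<gamma> :: "real \<Rightarrow> 'a::metric_space"
  assumes "isCont \<gamma> s0" "inj \<gamma>" "range \<gamma> \<subseteq> K" "K \<subseteq> X" "X \<subseteq> K \<union> Y" "closed Y"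
    and "finite (K \<inter> Y)" "\<And>u. u \<in> K \<Longrightarrow> f u = r"
  shows "\<not> isolated_local_extremum_on f X (\<gamma> s0)"
proof
  assume "isolated_local_extremum_on f X (\<gamma> s0)"
  then obtain e where "e > 0" and isolated: "\<And>u. local_extremum_on f X u \<Longrightarrow> dist u (\<gamma> s0) < e \<Longrightarrow> u = \<gamma> s0"
    unfolding isolated_local_extremum_on_def by blast
  then obtain d where "d > 0" and near: "\<And>s. dist s s0 < d \<Longrightarrow> dist (\<gamma> s) (\<gamma> s0) < e"
    using assms(1) unfolding continuous_at_eps_delta by blast
  have "finite (\<gamma> -` (K \<inter> Y))" using assms(2,7) by (rule finite_vimageI[rotated])
  moreover have "infinite {s0<..<s0 + d}" using \<open>d > 0\<close> by simp
  ultimately obtain s1 where s1: "s1 \<in> {s0<..<s0 + d}" "s1 \<notin> \<gamma> -` (K \<inter> Y)"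
    by (metis Diff_infinite_finite infinite_imp_nonempty DiffE ex_in_conv)
  define y where "y = \<gamma> s1"
  have "y \<notin> Y" using s1 assms(3) unfolding y_def by auto
  then obtain \<delta> where "\<delta> > 0" and ball: "ball y \<delta> \<subseteq> - Y"
    using assms(6) unfolding closed_def open_contains_ball by blast
  have "local_extremum_on f X y"
    unfolding local_extremum_on_def
  proof (intro conjI exI[of _ \<delta>] disjI1 ballI impI)
    show "y \<in> X" using assms(3,4) unfolding y_def by auto
    fix u assume "u \<in> X" "dist u y < \<delta>"
    then have "u \<in> K" using ball assms(5) by (auto simp: dist_commute subset_iff)
    then show "f u \<le> f y" using assms(3,8) unfolding y_def by (simp add: range_subsetD)
  qed fact
  moreover have "dist y (\<gamma> s0) < e" using near s1(1) unfolding y_def dist_real_def by auto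
  moreover have "y \<noteq> \<gamma> s0" using assms(2) s1(1) unfolding y_def inj_def by force
  ultimately show False using isolated by blast
qed

section \<open>Rational curves on the unit sphere\<close>

lemma coeff_mult_at_degree_bounds:
  fixes p q :: "'a::comm_semiring_0 poly"
  assumes "degree p \<le> m" "degree q \<le> n"
  shows "coeff (p * q) (m + n) = coeff p m * coeff q n"
proof -
  have "coeff (p * q) (m + n) = (\<Sum>i\<le>m+n. coeff p i * coeff q (m + n - i))" by (rule coeff_mult)
  also have "\<dots> = coeff p m * coeff q (m + n - m) + (\<Sum>i\<in>{..m+n} - {m}. coeff p i * coeff q (m + n - i))"
    by (subst sum.remove[of _ m]) auto
  also have "(\<Sum>i\<in>{..m+n} - {m}. coeff p i * coeff q (m + n - i)) = 0"
  proof (rule sum.neutral, rule ballI)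
    fix i assume i: "i \<in> {..m+n} - {m}"
    show "coeff p i * coeff q (m + n - i) = 0"
    proof (cases "i < m")
      case True
      then have "degree q < m + n - i" using assms i by auto
      then show ?thesis by (simp add: coeff_eq_0)
    next
      case False
      then have "degree p < i" using assms i by auto
      then show ?thesis by (simp add: coeff_eq_0)
    qed
  qed
  finally show ?thesis by simp
qed

text \<open>The numerator of the derivative of \<open>P / Q\<^sup>2\<close>. Its top coefficient cancels because
  \<open>P / Q\<^sup>2\<close> has degree 0.\<close>

lemma degree_quotient_deriv_numerator_le:
  fixes P Q :: "real poly"
  assumes "degree P \<le> 2 * d" "degree Q \<le> d" "1 \<le> d"
  shows "degree (pderiv P * Q - smult 2 (P * pderiv Q)) \<le> 3 * d - 2"
proof (rule degree_le, intro allI impI)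
  fix i assume i: "3 * d - 2 < i"
  have dP': "degree (pderiv P) \<le> 2 * d - 1" and dQ': "degree (pderiv Q) \<le> d - 1"
    using degree_pderiv[of P] degree_pderiv[of Q] assms by linarith+
  show "coeff (pderiv P * Q - smult 2 (P * pderiv Q)) i = 0"
  proof (cases "i = 3 * d - 1")
    case True
    have "coeff (pderiv P * Q) (3 * d - 1) = coeff (pderiv P) (2 * d - 1) * coeff Q d"
      using coeff_mult_at_degree_bounds[OF dP' assms(2)] assms(3)
      by (simp add: add.commute[of _ d] left_diff_distrib')
    moreover have "coeff (P * pderiv Q) (3 * d - 1) = coeff P (2 * d) * coeff (pderiv Q) (d - 1)"
      using coeff_mult_at_degree_bounds[OF assms(1) dQ'] assms(3) by (simp add: left_diff_distrib')
    moreover have "coeff (pderiv P) (2 * d - 1) = of_nat (2 * d) * coeff P (2 * d)"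
      "coeff (pderiv Q) (d - 1) = of_nat d * coeff Q d"
      using coeff_pderiv[of P "2 * d - 1"] coeff_pderiv[of Q "d - 1"] assms(3) by (simp_all add: Suc_diff_le)
    ultimately show ?thesis using True by simp
  next
    case False
    then have "2 * d - 1 + d < i" "2 * d + (d - 1) < i" using i assms(3) by linarith+
    then have "degree (pderiv P * Q) < i" "degree (P * pderiv Q) < i"
      using degree_mult_le[of "pderiv P" Q] degree_mult_le[of P "pderiv Q"] dP' dQ' assms(1,2)
      by linarith+
    then show ?thesis by (simp add: coeff_eq_0)
  qed
qed

lemma continuous_on_poly_curve: "continuous_on UNIV (poly_curve c)"
  unfolding poly_curve_def by (intro continuous_on_vec_lambda continuous_intros)

lemma deriv_along_unit_curve:
  fixes f :: "real^3 \<Rightarrow> real"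
  assumes "poly_function 4 f" "\<And>t v. f (t *\<^sub>R v) = t^4 * f v"
    and "\<And>i. degree (c i) \<le> k" "1 \<le> k" "\<And>s. poly_curve c s \<noteq> 0"
  obtains R Q where "degree R \<le> 6 * k - 2" "\<And>s. poly Q s > 0"
    "\<And>s. ((\<lambda>s. f (sgn (poly_curve c s))) has_real_derivative poly R s / poly Q s ^ 3) (at s)"
proof -
  obtain P where degP: "degree P \<le> 4 * k" and P: "\<And>s. poly P s = f (poly_curve c s)"
    using assms(1,3) unfolding poly_function_def by blast
  define Q where "Q = (\<Sum>i\<in>UNIV. c i * c i)"
  have Q: "poly Q s = poly_curve c s \<bullet> poly_curve c s" for s
    unfolding Q_def poly_curve_def by (simp add: poly_sum inner_vec_def)
  have "degree Q \<le> 2 * k"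
    unfolding Q_def using assms(3)
    by (intro degree_sum_le order.trans[OF degree_mult_le]) (auto simp: mult_2 intro: add_mono)
  have Q_pos: "poly Q s > 0" for s using assms(5) Q by simp
  have "f (sgn (poly_curve c s)) = poly P s / poly (Q * Q) s" for s
  proof -
    have "f (sgn (poly_curve c s)) = (1 / norm (poly_curve c s))^4 * f (poly_curve c s)"
      using assms(2) by (simp add: sgn_div_norm divide_inverse_commute)
    moreover have "norm (poly_curve c s) ^ 4 = poly Q s * poly Q s"
      unfolding Q by (simp add: power2_norm_eq_inner[symmetric] power4_eq_xxxx power2_eq_square)
    ultimately show ?thesis using P by (simp add: power_one_over)
  qed
  then have f_sgn: "(\<lambda>s. f (sgn (poly_curve c s))) = (\<lambda>s. poly P s / poly (Q * Q) s)" by auto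
  define R where "R = pderiv P * Q - smult 2 (P * pderiv Q)"
  have "((\<lambda>s. poly P s / poly (Q * Q) s) has_real_derivative poly R s / poly Q s ^ 3) (at s)" for s
  proof -
    have "poly (Q * Q) s \<noteq> 0" using Q_pos[of s] by simp
    then have "((\<lambda>s. poly P s / poly (Q * Q) s) has_real_derivative
        (poly (pderiv P) s * poly (Q * Q) s - poly P s * poly (pderiv (Q * Q)) s)
        / (poly (Q * Q) s * poly (Q * Q) s)) (at s)"
      by (rule DERIV_divide[OF poly_DERIV poly_DERIV])
    moreover have "(poly (pderiv P) s * poly (Q * Q) s - poly P s * poly (pderiv (Q * Q)) s)
        / (poly (Q * Q) s * poly (Q * Q) s) = poly R s / poly Q s ^ 3"
      unfolding R_def using Q_pos[of s] by (simp add: pderiv_mult field_simps power3_eq_cube)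
    ultimately show ?thesis by simp
  qed
  moreover have "degree R \<le> 6 * k - 2"
    using degree_quotient_deriv_numerator_le[of P "2 * k" Q] degP \<open>degree Q \<le> 2 * k\<close> assms(4)
    unfolding R_def by simp
  ultimately show ?thesis using that Q_pos unfolding f_sgn by blast
qed

definition unit_trace :: "(3 \<Rightarrow> real poly) \<Rightarrow> (real^3) set" where
  "unit_trace c = range (\<lambda>s. sgn (poly_curve c s)) \<union> range (\<lambda>s. - sgn (poly_curve c s))"

definition proj_injective :: "(3 \<Rightarrow> real poly) \<Rightarrow> bool" where
  "proj_injective c \<longleftrightarrow> (\<forall>s s' m. poly_curve c s = m *\<^sub>R poly_curve c s' \<longrightarrow> s = s')"

lemma proj_injective_sgnD:
  assumes "proj_injective c" "sgn (poly_curve c s) = \<sigma> *\<^sub>R sgn (poly_curve c s')"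
  shows "s = s'"
proof -
  have "poly_curve c s = norm (poly_curve c s) *\<^sub>R sgn (poly_curve c s)"
    by (cases "poly_curve c s = 0") (simp_all add: sgn_div_norm)
  also have "\<dots> = (norm (poly_curve c s) * \<sigma> / norm (poly_curve c s')) *\<^sub>R poly_curve c s'"
    using assms(2) by (simp add: sgn_div_norm divide_inverse_commute)
  finally show ?thesis using assms(1) unfolding proj_injective_def by blast
qed

lemma infinite_range_sgn_poly_curve:
  assumes "proj_injective c"
  shows "infinite (range (\<lambda>s. sgn (poly_curve c s)))"
proof -
  have "inj (\<lambda>s. sgn (poly_curve c s))"
    using proj_injective_sgnD[OF assms, of _ 1] by (auto intro: injI)
  then show ?thesis using infinite_UNIV_char_0 finite_imageD by blast
qed

lemma unit_in_unit_trace: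
  assumes "v \<bullet> v = 1" "v = l *\<^sub>R poly_curve c s"
  shows "v \<in> unit_trace c"
  using unit_eq_scaleR_imp_sgn[of v l "poly_curve c s"] assms
  unfolding unit_trace_def by (auto simp: norm_eq_sqrt_inner)

lemma signed_unit_curve:
  assumes "\<And>s. poly_curve c s \<noteq> 0" "proj_injective c" "\<sigma> \<in> {1, -1}"
  shows "isCont (\<lambda>s. \<sigma> *\<^sub>R sgn (poly_curve c s)) s" "inj (\<lambda>s. \<sigma> *\<^sub>R sgn (poly_curve c s))"
    "range (\<lambda>s. \<sigma> *\<^sub>R sgn (poly_curve c s)) \<subseteq> unit_trace c"
proof -
  have "continuous_on UNIV (\<lambda>s. \<sigma> *\<^sub>R sgn (poly_curve c s))"
    unfolding sgn_div_norm by (intro continuous_intros continuous_on_poly_curve) (use assms(1) in auto)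
  then show "isCont (\<lambda>s. \<sigma> *\<^sub>R sgn (poly_curve c s)) s" by (simp add: continuous_on_eq_continuous_at)
  show "inj (\<lambda>s. \<sigma> *\<^sub>R sgn (poly_curve c s))"
    using assms(3) proj_injective_sgnD[OF assms(2), of _ 1] by (auto intro!: injI)
  show "range (\<lambda>s. \<sigma> *\<^sub>R sgn (poly_curve c s)) \<subseteq> unit_trace c"
    using assms(3) unfolding unit_trace_def by auto
qed

text \<open>If \<open>R = 0\<close>, then \<open>f\<close> is constant on the trace, and no extremum on it is isolated.\<close>

lemma isolated_local_extremum_on_unit_trace_imp_root:
  fixes f :: "real^3 \<Rightarrow> real"
  assumes hom: "\<And>t v. f (t *\<^sub>R v) = t^4 * f v"
    and c: "\<And>s. poly_curve c s \<noteq> 0" "proj_injective c"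
    and X: "unit_trace c \<subseteq> X" "X \<subseteq> unit_trace c \<union> Y" "closed Y" "finite (unit_trace c \<inter> Y)"
    and deriv: "\<And>s. ((\<lambda>s. f (sgn (poly_curve c s))) has_real_derivative poly R s / poly Q s ^ 3) (at s)"
    and Q: "\<And>s. poly Q s > 0"
    and v: "isolated_local_extremum_on f X v" "v \<in> unit_trace c"
  shows "R \<noteq> 0 \<and> (\<exists>\<sigma>\<in>{1, -1}. \<exists>s. v = \<sigma> *\<^sub>R sgn (poly_curve c s) \<and> poly R s = 0)"
proof -
  obtain \<sigma> s where \<sigma>: "\<sigma> \<in> {1, -1}" and vs: "v = \<sigma> *\<^sub>R sgn (poly_curve c s)"
    using v(2) unfolding unit_trace_def by force
  note \<gamma> = signed_unit_curve[OF c \<sigma>]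
  have f_\<gamma>: "f (\<sigma> *\<^sub>R u) = f u" for u using \<sigma> hom[of "-1"] by auto
  have "local_extremum_on f X (\<sigma> *\<^sub>R sgn (poly_curve c s))"
    using v(1) unfolding vs isolated_local_extremum_on_def by blast
  moreover have "\<sigma> *\<^sub>R sgn (poly_curve c s') \<in> X" for s' using \<gamma>(3) X(1) by blast
  moreover have "((\<lambda>s. f (\<sigma> *\<^sub>R sgn (poly_curve c s))) has_real_derivative poly R s / poly Q s ^ 3) (at s)"
    using deriv unfolding f_\<gamma> .
  ultimately have "poly R s / poly Q s ^ 3 = 0"
    by (rule local_extremum_on_curve_imp_deriv_eq_0[OF _ \<gamma>(1)])
  then have "poly R s = 0" using Q[of s] by simp
  moreover have "R \<noteq> 0"
  proof
    assume "R = 0"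
    then have "f (sgn (poly_curve c s')) = f (sgn (poly_curve c 0))" for s'
      by (intro DERIV_isconst_all[of "\<lambda>s. f (sgn (poly_curve c s))"]) (use deriv in simp)
    then have "u \<in> unit_trace c \<Longrightarrow> f u = f (sgn (poly_curve c 0))" for u
      using hom[of "-1"] unfolding unit_trace_def by auto
    then have "\<not> isolated_local_extremum_on f X v"
      unfolding vs using not_isolated_local_extremum_on_constant_curve[OF \<gamma>(1,2,3) X] by blast
    then show False using v(1) by blast
  qed
  ultimately show ?thesis using \<sigma> vs by blast
qed

lemma finite_card_le_if_subset_two_images:
  assumes "E \<subseteq> g ` Z \<union> h ` Z" "finite Z"
  shows "finite E \<and> card E \<le> 2 * card Z"
proof -
  have "finite (g ` Z \<union> h ` Z)" using assms(2) by simp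
  moreover have "card (g ` Z \<union> h ` Z) \<le> 2 * card Z"
    using card_Un_le[of "g ` Z" "h ` Z"] card_image_le[OF assms(2), of g] card_image_le[OF assms(2), of h]
    by linarith
  ultimately show ?thesis using finite_subset[OF assms(1)] card_mono[OF _ assms(1)] by fastforce
qed

lemma isolated_local_extrema_on_unit_trace:
  fixes f :: "real^3 \<Rightarrow> real"
  assumes f: "poly_function 4 f" "\<And>t v. f (t *\<^sub>R v) = t^4 * f v"
    and c: "\<And>i. degree (c i) \<le> k" "1 \<le> k" "\<And>s. poly_curve c s \<noteq> 0" "proj_injective c"
    and X: "unit_trace c \<subseteq> X" "X \<subseteq> unit_trace c \<union> Y" "closed Y" "finite (unit_trace c \<inter> Y)"
  defines "E \<equiv> {v. isolated_local_extremum_on f X v} \<inter> unit_trace c"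
  shows "finite E \<and> card E \<le> 2 * (6 * k - 2)"
proof (cases "E = {}")
  case False
  obtain R Q where deg_R: "degree R \<le> 6 * k - 2" and Q: "\<And>s. poly Q s > 0"
    and deriv: "\<And>s. ((\<lambda>s. f (sgn (poly_curve c s))) has_real_derivative poly R s / poly Q s ^ 3) (at s)"
    using deriv_along_unit_curve[OF f c(1-3)] by blast
  note root = isolated_local_extremum_on_unit_trace_imp_root[OF f(2) c(3,4) X deriv Q]
  define Z where "Z = {s. poly R s = 0}"
  have "R \<noteq> 0" using False root unfolding E_def by blast
  then have "finite Z" "card Z \<le> 6 * k - 2"
    unfolding Z_def using poly_roots_finite card_poly_roots_bound deg_R le_trans by blast+
  moreover have "E \<subseteq> (\<lambda>s. sgn (poly_curve c s)) ` Z \<union> (\<lambda>s. - sgn (poly_curve c s)) ` Z"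
  proof
    fix v assume "v \<in> E"
    then obtain \<sigma> s where "\<sigma> \<in> {1, -1}" "v = \<sigma> *\<^sub>R sgn (poly_curve c s)" "s \<in> Z"
      using root unfolding E_def Z_def by blast
    then show "v \<in> (\<lambda>s. sgn (poly_curve c s)) ` Z \<union> (\<lambda>s. - sgn (poly_curve c s)) ` Z" by auto
  qed
  ultimately show ?thesis using finite_card_le_if_subset_two_images[of E] by (meson le_trans mult_le_mono2)
qed simp

section \<open>The great circle and the cone\<close>

definition circle_curve :: "real^3 \<Rightarrow> real^3 \<Rightarrow> 3 \<Rightarrow> real poly" where
  "circle_curve a w = (\<lambda>i. [: sgn (a \<times> w) $ i, w $ i :])"

lemma poly_curve_circle_curve: "poly_curve (circle_curve a w) s = sgn (a \<times> w) + s *\<^sub>R w"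
  unfolding poly_curve_def circle_curve_def by (simp add: vec_eq_iff)

lemma degree_circle_curve: "degree (circle_curve a w i) \<le> 1"
  unfolding circle_curve_def by simp

context
  fixes a w :: "real^3"
  assumes a: "a \<noteq> 0" and w: "a \<bullet> w = 0" "w \<bullet> w = 1"
begin

private lemma circle_frame: "a \<times> w \<noteq> 0" "sgn (a \<times> w) \<bullet> sgn (a \<times> w) = 1" "sgn (a \<times> w) \<bullet> w = 0"
  "a \<bullet> sgn (a \<times> w) = 0"
proof -
  have "(norm (a \<times> w))^2 = (norm a)^2" using norm_cross[of a w] w by (simp add: power2_norm_eq_inner)
  then show "a \<times> w \<noteq> 0" using a by auto
  then show "sgn (a \<times> w) \<bullet> sgn (a \<times> w) = 1" by (rule inner_sgn_self)
  show "sgn (a \<times> w) \<bullet> w = 0" "a \<bullet> sgn (a \<times> w) = 0" by (simp_all add: sgn_div_norm dot_cross_self)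
qed

lemma inner_poly_curve_circle_curve:
  "poly_curve (circle_curve a w) s \<bullet> sgn (a \<times> w) = 1" "poly_curve (circle_curve a w) s \<bullet> w = s"
  "a \<bullet> poly_curve (circle_curve a w) s = 0"
  unfolding poly_curve_circle_curve using circle_frame w
  by (simp_all add: inner_add_left inner_add_right inner_commute)

lemma poly_curve_circle_curve_nonzero: "poly_curve (circle_curve a w) s \<noteq> 0"
proof
  assume "poly_curve (circle_curve a w) s = 0"
  then show False using inner_poly_curve_circle_curve(1)[of s] by simp
qed

lemma proj_injective_circle_curve: "proj_injective (circle_curve a w)"
  unfolding proj_injective_def
proof (intro allI impI)
  fix s s' m assume eq: "poly_curve (circle_curve a w) s = m *\<^sub>R poly_curve (circle_curve a w) s'"
  have "1 = m" using arg_cong[OF eq, of "\<lambda>x. x \<bullet> sgn (a \<times> w)"]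
    by (simp only: inner_poly_curve_circle_curve inner_scaleR_left mult_1_right)
  moreover have "s = m * s'" using arg_cong[OF eq, of "\<lambda>x. x \<bullet> w"]
    by (simp only: inner_poly_curve_circle_curve inner_scaleR_left)
  ultimately show "s = s'" by simp
qed

lemma unit_trace_circle_curve_subset: "unit_trace (circle_curve a w) \<subseteq> {v. a \<bullet> v = 0 \<and> v \<bullet> v = 1}"
  using inner_poly_curve_circle_curve(3) inner_sgn_self[OF poly_curve_circle_curve_nonzero]
  by (auto simp: unit_trace_def sgn_div_norm)

lemma circle_subset_unit_trace_circle_curve:
  assumes "a \<bullet> v = 0" "v \<bullet> v = 1"
  shows "v \<in> unit_trace (circle_curve a w) \<union> {w, - w}"
proof -
  define w' where "w' = sgn (a \<times> w)"
  have "v - (v \<bullet> w') *\<^sub>R w' - (v \<bullet> w) *\<^sub>R w = 0"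
  proof (rule eq_0_if_orthogonal_to_basis)
    show "triple a w w' \<noteq> 0"
      using circle_frame(1) unfolding triple_eq_inner_cross w'_def sgn_div_norm by simp
  qed (use assms w circle_frame in \<open>simp_all add: w'_def inner_diff_right inner_commute\<close>)
  then have v: "v = (v \<bullet> w') *\<^sub>R w' + (v \<bullet> w) *\<^sub>R w" by (simp add: algebra_simps)
  show ?thesis
  proof (cases "v \<bullet> w' = 0")
    case False
    then have "v = (v \<bullet> w') *\<^sub>R poly_curve (circle_curve a w) ((v \<bullet> w) / (v \<bullet> w'))"
      unfolding poly_curve_circle_curve w'_def[symmetric] by (subst v) (simp add: scaleR_add_right)
    then show ?thesis using unit_in_unit_trace assms(2) by blast
  next
    case True
    then have "v = (v \<bullet> w) *\<^sub>R w" using v by simp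
    moreover have "sgn w = w" using w(2) by (simp add: sgn_div_norm norm_eq_sqrt_inner)
    ultimately show ?thesis using unit_eq_scaleR_imp_sgn[of v "v \<bullet> w" w] assms(2)
      by (auto simp: norm_eq_sqrt_inner)
  qed
qed

end

context nondeg_qform
begin

text \<open>For isotropic \<open>v0\<close>, the line \<open>v0 + t d\<close> meets the cone \<open>qf = 0\<close> again at
  \<open>t = -2 bf v0 d / qf d\<close>; \<open>cone_point v0 d\<close> is that second intersection point, scaled by \<open>qf d\<close>
  so that it depends polynomially on \<open>d\<close>.\<close>

definition cone_point :: "real^3 \<Rightarrow> real^3 \<Rightarrow> real^3" where
  "cone_point v0 d = qf d *\<^sub>R v0 - (2 * bf v0 d) *\<^sub>R d"

definition cone_curve :: "real^3 \<Rightarrow> real^3 \<Rightarrow> real^3 \<Rightarrow> 3 \<Rightarrow> real poly" where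
  "cone_curve v0 d0 d1 = (\<lambda>i. smult (v0$i) [:qf d0, 2 * bf d0 d1, qf d1:]
     - smult 2 ([:bf v0 d0, bf v0 d1:] * [:d0$i, d1$i:]))"

lemma degree_cone_curve: "degree (cone_curve v0 d0 d1 i) \<le> 2"
proof -
  have "degree (smult (v0$i) [:qf d0, 2 * bf d0 d1, qf d1:]) \<le> 2"
    by (rule order.trans[OF degree_smult_le]) simp
  moreover have "degree (smult 2 ([:bf v0 d0, bf v0 d1:] * [:d0$i, d1$i:])) \<le> 2"
    by (rule order.trans[OF degree_smult_le], rule order.trans[OF degree_mult_le]) simp
  ultimately show ?thesis unfolding cone_curve_def by (rule degree_diff_le)
qed

lemma poly_curve_cone_curve: "poly_curve (cone_curve v0 d0 d1) s = cone_point v0 (d0 + s *\<^sub>R d1)"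
proof -
  have "qf (d0 + s *\<^sub>R d1) = qf d0 + 2 * s * bf d0 d1 + s^2 * qf d1"
    using qf_linear_combination[of 1 d0 s d1] by simp
  moreover have "bf v0 (d0 + s *\<^sub>R d1) = bf v0 d0 + s * bf v0 d1" by (simp add: bf_simps)
  ultimately show ?thesis unfolding poly_curve_def cone_curve_def cone_point_def
    by (simp add: vec_eq_iff algebra_simps power2_eq_square)
qed

lemma qf_cone_point: "qf v0 = 0 \<Longrightarrow> qf (cone_point v0 d) = 0"
  unfolding cone_point_def by (simp add: bf_simps bf_commute[of d v0] algebra_simps)

lemma cone_point_scaleR: "cone_point v0 (t *\<^sub>R d) = t^2 *\<^sub>R cone_point v0 d"
  unfolding cone_point_def by (simp add: bf_simps power2_eq_square algebra_simps)

lemma cone_point_of_isotropic: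
  "qf v0 = 0 \<Longrightarrow> qf x = 0 \<Longrightarrow> cone_point v0 (x - t *\<^sub>R v0) = - (2 * bf v0 x) *\<^sub>R x"
  unfolding cone_point_def by (simp add: bf_simps bf_commute[of x v0] algebra_simps)

lemma cone_point_nonzero:
  assumes "qf v0 = 0" "v0 \<times> d \<noteq> 0"
  shows "cone_point v0 d \<noteq> 0"
proof
  assume 0: "cone_point v0 d = 0"
  have "cone_point v0 d \<times> d = qf d *\<^sub>R (v0 \<times> d)" "v0 \<times> cone_point v0 d = - (2 * bf v0 d) *\<^sub>R (v0 \<times> d)"
    unfolding cone_point_def by (simp_all add: cross3_simps forall_3)
  then have "qf d = 0" "bf v0 d = 0" using 0 assms(2) by simp_all
  then show False using isotropic_orthogonal_imp_parallel assms by blast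
qed

lemma triple_cone_point:
  "triple v0 (cone_point v0 d) z = - (2 * bf v0 d) * triple v0 d z"
  "triple v0 z (cone_point v0 d) = - (2 * bf v0 d) * triple v0 z d"
  unfolding cone_point_def triple_def by (simp_all add: cross3_simps forall_3)

context
  fixes v0 d0 d1 :: "real^3"
  assumes v0: "qf v0 = 0" "v0 \<bullet> v0 = 1" and T: "triple v0 d0 d1 \<noteq> 0"
begin

private lemma triple_v0_line: "triple v0 (d0 + s *\<^sub>R d1) d1 = triple v0 d0 d1"
  "triple v0 d0 (d0 + s *\<^sub>R d1) = s * triple v0 d0 d1"
  unfolding triple_def by (simp_all add: cross_add_left cross_add_right cross_mult_left cross_mult_right
      inner_add_right cross_refl)

lemma poly_curve_cone_curve_nonzero: "poly_curve (cone_curve v0 d0 d1) s \<noteq> 0"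
proof -
  have "v0 \<times> (d0 + s *\<^sub>R d1) \<noteq> 0"
    using triple_v0_line(1)[of s] T by (auto simp: triple_eq_inner_cross)
  then show ?thesis unfolding poly_curve_cone_curve using cone_point_nonzero v0(1) by blast
qed

lemma unit_trace_cone_curve_subset: "unit_trace (cone_curve v0 d0 d1) \<subseteq> {v. qf v = 0 \<and> v \<bullet> v = 1}"
proof -
  have "qf (sgn (poly_curve (cone_curve v0 d0 d1) s)) = 0" for s
    unfolding sgn_div_norm poly_curve_cone_curve bf_scaleR_left bf_scaleR_right qf_cone_point[OF v0(1)]
    by simp
  then show ?thesis using inner_sgn_self[OF poly_curve_cone_curve_nonzero]
    by (auto simp: unit_trace_def bf_minus_left bf_minus_right)
qed

lemma bf_v0_nonzero: "bf v0 d0 \<noteq> 0 \<or> bf v0 d1 \<noteq> 0"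
proof (rule ccontr)
  assume "\<not> ?thesis"
  then have "bf v0 d0 = 0" "bf v0 d1 = 0" by simp_all
  moreover have "(S *v v0) \<bullet> x = bf v0 x" for x
    unfolding bf_commute[of v0 x] by (simp add: bf_def inner_commute)
  ultimately have "(S *v v0) \<bullet> v0 = 0" "(S *v v0) \<bullet> d0 = 0" "(S *v v0) \<bullet> d1 = 0"
    using v0(1) by simp_all
  then have "S *v v0 = 0" by (rule eq_0_if_orthogonal_to_basis[OF T])
  then have "v0 = 0" by (rule injective)
  then show False using v0(2) by simp
qed

lemma proj_injective_cone_curve: "proj_injective (cone_curve v0 d0 d1)"
  unfolding proj_injective_def
proof (intro allI impI)
  fix s s' m assume eq: "poly_curve (cone_curve v0 d0 d1) s = m *\<^sub>R poly_curve (cone_curve v0 d0 d1) s'"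
  define B where "B s = bf v0 d0 + s * bf v0 d1" for s
  have triples: "triple v0 (poly_curve (cone_curve v0 d0 d1) s) d1 = - 2 * B s * triple v0 d0 d1"
    "triple v0 d0 (poly_curve (cone_curve v0 d0 d1) s) = - 2 * B s * (s * triple v0 d0 d1)" for s
    unfolding poly_curve_cone_curve triple_cone_point triple_v0_line B_def by (simp_all add: bf_simps)
  have "m \<noteq> 0" using eq poly_curve_cone_curve_nonzero by auto
  have "triple v0 (poly_curve (cone_curve v0 d0 d1) s) d1 = m * triple v0 (poly_curve (cone_curve v0 d0 d1) s') d1"
    "triple v0 d0 (poly_curve (cone_curve v0 d0 d1) s) = m * triple v0 d0 (poly_curve (cone_curve v0 d0 d1) s')"
    unfolding eq by (simp_all add: triple_def cross_mult_left cross_mult_right)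
  then have "B s = m * B s'" "B s * s = m * B s' * s'" unfolding triples using T by simp_all
  then show "s = s'"
  proof (cases "B s = 0")
    case True
    then have "B s' = 0" using \<open>B s = m * B s'\<close> \<open>m \<noteq> 0\<close> by simp
    with True have "(s - s') * bf v0 d1 = 0" "bf v0 d0 + s * bf v0 d1 = 0"
      unfolding B_def by algebra+
    then show ?thesis using bf_v0_nonzero by auto
  qed simp
qed

lemma pm_v0_in_unit_trace_cone_curve:
  assumes "bf v0 d1 \<noteq> 0"
  shows "v0 \<in> unit_trace (cone_curve v0 d0 d1)" "- v0 \<in> unit_trace (cone_curve v0 d0 d1)"
proof -
  define s0 where "s0 = - bf v0 d0 / bf v0 d1"
  have c0: "poly_curve (cone_curve v0 d0 d1) s0 = qf (d0 + s0 *\<^sub>R d1) *\<^sub>R v0"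
    unfolding poly_curve_cone_curve cone_point_def s0_def using assms by (simp add: bf_simps)
  then have "qf (d0 + s0 *\<^sub>R d1) \<noteq> 0" using poly_curve_cone_curve_nonzero by force
  then have "v0 = (1 / qf (d0 + s0 *\<^sub>R d1)) *\<^sub>R poly_curve (cone_curve v0 d0 d1) s0"
    "- v0 = (- 1 / qf (d0 + s0 *\<^sub>R d1)) *\<^sub>R poly_curve (cone_curve v0 d0 d1) s0"
    unfolding c0 by simp_all
  moreover have "- v0 \<bullet> - v0 = 1" using v0(2) by simp
  ultimately show "v0 \<in> unit_trace (cone_curve v0 d0 d1)" "- v0 \<in> unit_trace (cone_curve v0 d0 d1)"
    using unit_in_unit_trace v0(2) by blast+
qed

lemma cone_subset_unit_trace_cone_curve:
  assumes d1: "qf d1 = 0" "d1 \<bullet> d1 = 1" "bf v0 d1 \<noteq> 0" and x: "qf x = 0" "x \<bullet> x = 1"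
  shows "x \<in> unit_trace (cone_curve v0 d0 d1) \<union> {d1, - d1}"
proof (cases "bf v0 x = 0")
  case True
  have "x \<times> v0 = 0"
    using isotropic_orthogonal_imp_parallel[OF x(1) v0(1)] True bf_commute[of v0 x] by simp
  then have "x = v0 \<or> x = - v0" using unit_parallel_imp_eq_or_neg[OF x(2) v0(2)] by blast
  then show ?thesis using pm_v0_in_unit_trace_cone_curve[OF d1(3)] by blast
next
  case False
  define \<beta> \<gamma> where "\<beta> = triple v0 x d1 / triple v0 d0 d1" and "\<gamma> = triple v0 d0 x / triple v0 d0 d1"
  have "x = (triple x d0 d1 / triple v0 d0 d1) *\<^sub>R v0 + \<beta> *\<^sub>R d0 + \<gamma> *\<^sub>R d1"
    unfolding \<beta>_def \<gamma>_def by (rule triple_coordinates[OF T])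
  then have "\<beta> *\<^sub>R d0 + \<gamma> *\<^sub>R d1 = x - (triple x d0 d1 / triple v0 d0 d1) *\<^sub>R v0"
    by (simp add: algebra_simps)
  then have x_cone_point: "cone_point v0 (\<beta> *\<^sub>R d0 + \<gamma> *\<^sub>R d1) = - (2 * bf v0 x) *\<^sub>R x"
    using cone_point_of_isotropic[OF v0(1) x(1)] by simp
  show ?thesis
  proof (cases "\<beta> = 0")
    case False
    have "\<beta> *\<^sub>R d0 + \<gamma> *\<^sub>R d1 = \<beta> *\<^sub>R (d0 + (\<gamma> / \<beta>) *\<^sub>R d1)" using False by (simp add: scaleR_add_right)
    then have "- (2 * bf v0 x) *\<^sub>R x = \<beta>^2 *\<^sub>R poly_curve (cone_curve v0 d0 d1) (\<gamma> / \<beta>)"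
      using x_cone_point unfolding poly_curve_cone_curve by (simp add: cone_point_scaleR)
    then have "x = (1 / - (2 * bf v0 x)) *\<^sub>R (\<beta>^2 *\<^sub>R poly_curve (cone_curve v0 d0 d1) (\<gamma> / \<beta>))"
      by (rule scaleR_eq_imp_eq_scaleR_inverse[rotated]) (use \<open>bf v0 x \<noteq> 0\<close> in simp)
    then have "x = (1 / - (2 * bf v0 x) * \<beta>^2) *\<^sub>R poly_curve (cone_curve v0 d0 d1) (\<gamma> / \<beta>)"
      by (simp only: scaleR_scaleR)
    then show ?thesis using unit_in_unit_trace[OF x(2)] by blast
  next
    case True
    have "cone_point v0 d1 = - (2 * bf v0 d1) *\<^sub>R d1"
      unfolding cone_point_def using d1(1) by simp
    then have "- (2 * bf v0 x) *\<^sub>R x = (- 2 * \<gamma>^2 * bf v0 d1) *\<^sub>R d1"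
      using x_cone_point True by (simp add: cone_point_scaleR mult_ac)
    then have "x = (1 / - (2 * bf v0 x)) *\<^sub>R ((- 2 * \<gamma>^2 * bf v0 d1) *\<^sub>R d1)"
      by (rule scaleR_eq_imp_eq_scaleR_inverse[rotated]) (use \<open>bf v0 x \<noteq> 0\<close> in simp)
    moreover have "sgn d1 = d1" using d1(2) by (simp add: sgn_div_norm norm_eq_sqrt_inner)
    ultimately show ?thesis
      using unit_eq_scaleR_imp_sgn[of x "1 / - (2 * bf v0 x) * (- 2 * \<gamma>^2 * bf v0 d1)" d1] x(2)
      by (auto simp: norm_eq_sqrt_inner)
  qed
qed

end

end

context nondeg_qform
begin

lemma finite_circle_inter_cone:
  assumes "a \<noteq> 0"
  shows "finite {v. a \<bullet> v = 0 \<and> qf v = 0 \<and> v \<bullet> v = 1}"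
proof -
  obtain w where w: "a \<bullet> w = 0" "w \<bullet> w = 1" by (rule exists_unit_orthogonal)
  define c where "c = circle_curve a w"
  define w' where "w' = sgn (a \<times> w)"
  define q where "q = [: qf w', 2 * bf w' w, qf w :]"
  have q: "poly q s = qf (poly_curve c s)" for s
    unfolding q_def c_def poly_curve_circle_curve w'_def[symmetric]
    using qf_linear_combination[of 1 w' s w] by (simp add: algebra_simps power2_eq_square)
  have "w' \<times> w \<noteq> 0"
  proof -
    have "w' \<bullet> w' = 1" "w' \<bullet> w = 0" using inner_poly_curve_circle_curve[OF assms w, of 0]
      unfolding w'_def poly_curve_circle_curve using w(2) by (simp_all add: inner_add_left)
    then have "(w' \<times> w) \<bullet> (w' \<times> w) = 1"
      using norm_cross[of w' w] w(2) by (simp add: power2_norm_eq_inner)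
    then show ?thesis by auto
  qed
  then have "q \<noteq> 0" using isotropic_orthogonal_imp_parallel unfolding q_def by auto
  define Z where "Z = {s. poly q s = 0}"
  have "finite Z" unfolding Z_def using \<open>q \<noteq> 0\<close> by (rule poly_roots_finite)
  moreover have "{v. a \<bullet> v = 0 \<and> qf v = 0 \<and> v \<bullet> v = 1} \<subseteq>
      (\<lambda>s. sgn (poly_curve c s)) ` Z \<union> (\<lambda>s. - sgn (poly_curve c s)) ` Z \<union> {w, - w}"
  proof
    fix v assume v: "v \<in> {v. a \<bullet> v = 0 \<and> qf v = 0 \<and> v \<bullet> v = 1}"
    have "s \<in> Z" if "v = sgn (poly_curve c s) \<or> v = - sgn (poly_curve c s)" for s
      using that v unfolding Z_def q sgn_div_norm
      by (auto simp: bf_scaleR_left bf_scaleR_right bf_minus_left bf_minus_right c_def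
          poly_curve_circle_curve_nonzero[OF assms w])
    then show "v \<in> (\<lambda>s. sgn (poly_curve c s)) ` Z \<union> (\<lambda>s. - sgn (poly_curve c s)) ` Z \<union> {w, - w}"
      using circle_subset_unit_trace_circle_curve[OF assms w, of v] v unfolding unit_trace_def c_def
      by blast
  qed
  ultimately show ?thesis by (auto intro: finite_subset)
qed

end

section \<open>Counting isolated extrema\<close>

lemma finite_card_le_if_punctured_covers:
  fixes E C :: "'a::ab_group_add set"
  assumes "infinite C" "finite B"
    and "\<And>w. w \<in> C - B \<Longrightarrow> \<exists>K. finite (E \<inter> K) \<and> card (E \<inter> K) \<le> N \<and> C \<subseteq> K \<union> {w, - w}"
  shows "finite (E \<inter> C) \<and> card (E \<inter> C) \<le> N"
proof -
  have "infinite (C - B)" using assms(1,2) by (rule Diff_infinite_finite[rotated])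
  then obtain w0 where "w0 \<in> C - B" using infinite_imp_nonempty by blast
  then obtain K0 where "finite (E \<inter> K0)" "C \<subseteq> K0 \<union> {w0, - w0}" using assms(3) by blast
  then have "E \<inter> C \<subseteq> (E \<inter> K0) \<union> {w0, - w0}" "finite ((E \<inter> K0) \<union> {w0, - w0})" by auto
  then have fin: "finite (E \<inter> C)" by (rule finite_subset)
  then have "infinite (C - B - (E \<inter> C) - uminus ` (E \<inter> C))"
    using \<open>infinite (C - B)\<close> by (simp add: Diff_infinite_finite)
  then obtain w where w: "w \<in> C - B" "w \<notin> E" "w \<notin> uminus ` (E \<inter> C)"
    using infinite_imp_nonempty by blast
  then obtain K where K: "finite (E \<inter> K)" "card (E \<inter> K) \<le> N" "C \<subseteq> K \<union> {w, - w}"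
    using assms(3) by blast
  have "E \<inter> C \<subseteq> E \<inter> K"
  proof
    fix v assume v: "v \<in> E \<inter> C"
    then have "v \<noteq> - w" using w(3) by (metis minus_minus rev_image_eqI)
    then show "v \<in> E \<inter> K" using v w(2) K(3) by blast
  qed
  then have "card (E \<inter> C) \<le> card (E \<inter> K)" using K(1) by (rule card_mono[rotated])
  then show ?thesis using fin K(2) by linarith
qed

lemma isolated_local_extrema_on_curve_family:
  fixes f :: "real^3 \<Rightarrow> real"
  assumes f: "poly_function 4 f" "\<And>t v. f (t *\<^sub>R v) = t^4 * f v" and "1 \<le> k"
    and X: "X = C \<union> D" "closed D" "finite (C \<inter> D)" and "infinite C" "finite B"
    and curves: "\<And>w. w \<in> C - B \<Longrightarrow> \<exists>c. (\<forall>i. degree (c i) \<le> k) \<and> (\<forall>s. poly_curve c s \<noteq> 0)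
       \<and> proj_injective c \<and> unit_trace c \<subseteq> C \<and> C \<subseteq> unit_trace c \<union> {w, - w}"
  shows "finite ({v. isolated_local_extremum_on f X v} \<inter> C)
    \<and> card ({v. isolated_local_extremum_on f X v} \<inter> C) \<le> 2 * (6 * k - 2)"
proof (rule finite_card_le_if_punctured_covers[OF \<open>infinite C\<close> \<open>finite B\<close>])
  fix w assume "w \<in> C - B"
  then obtain c where c: "\<And>i. degree (c i) \<le> k" "\<And>s. poly_curve c s \<noteq> 0" "proj_injective c"
    and trace: "unit_trace c \<subseteq> C" and cover: "C \<subseteq> unit_trace c \<union> {w, - w}"
    using curves by blast
  have "unit_trace c \<inter> (D \<union> {w, - w}) \<subseteq> (C \<inter> D) \<union> {w, - w}" using trace by blast
  then have "finite (unit_trace c \<inter> (D \<union> {w, - w}))"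
    by (rule finite_subset) (use X(3) in simp)
  moreover have "closed (D \<union> {w, - w})" by (rule closed_Un[OF X(2) finite_imp_closed]) simp
  moreover have "unit_trace c \<subseteq> X" "X \<subseteq> unit_trace c \<union> (D \<union> {w, - w})"
    using trace cover X(1) by blast+
  ultimately have "finite ({v. isolated_local_extremum_on f X v} \<inter> unit_trace c)
      \<and> card ({v. isolated_local_extremum_on f X v} \<inter> unit_trace c) \<le> 2 * (6 * k - 2)"
    using isolated_local_extrema_on_unit_trace[OF f c(1) \<open>1 \<le> k\<close> c(2,3)] by blast
  then show "\<exists>K. finite ({v. isolated_local_extremum_on f X v} \<inter> K)
      \<and> card ({v. isolated_local_extremum_on f X v} \<inter> K) \<le> 2 * (6 * k - 2) \<and> C \<subseteq> K \<union> {w, - w}"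
    using cover by blast
qed

lemma closed_great_circle: "closed {v::real^3. a \<bullet> v = 0 \<and> v \<bullet> v = 1}"
  by (intro closed_Collect_conj closed_Collect_eq continuous_intros)

lemma isolated_local_extrema_on_great_circle:
  fixes f :: "real^3 \<Rightarrow> real"
  assumes f: "poly_function 4 f" "\<And>t v. f (t *\<^sub>R v) = t^4 * f v" and a: "a \<noteq> 0"
    and X: "X = {v. a \<bullet> v = 0 \<and> v \<bullet> v = 1} \<union> D" "closed D"
      "finite ({v. a \<bullet> v = 0 \<and> v \<bullet> v = 1} \<inter> D)"
  shows "finite ({v. isolated_local_extremum_on f X v} \<inter> {v. a \<bullet> v = 0 \<and> v \<bullet> v = 1})
    \<and> card ({v. isolated_local_extremum_on f X v} \<inter> {v. a \<bullet> v = 0 \<and> v \<bullet> v = 1}) \<le> 8"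
proof -
  have curve: "(\<forall>i. degree (circle_curve a w i) \<le> 1) \<and> (\<forall>s. poly_curve (circle_curve a w) s \<noteq> 0)
      \<and> proj_injective (circle_curve a w) \<and> unit_trace (circle_curve a w) \<subseteq> {v. a \<bullet> v = 0 \<and> v \<bullet> v = 1}
      \<and> {v. a \<bullet> v = 0 \<and> v \<bullet> v = 1} \<subseteq> unit_trace (circle_curve a w) \<union> {w, - w}"
    if "a \<bullet> w = 0" "w \<bullet> w = 1" for w
    using degree_circle_curve poly_curve_circle_curve_nonzero[OF a that] proj_injective_circle_curve[OF a that]
      unit_trace_circle_curve_subset[OF a that] circle_subset_unit_trace_circle_curve[OF a that] by blast
  obtain w0 where w0: "a \<bullet> w0 = 0" "w0 \<bullet> w0 = 1" by (rule exists_unit_orthogonal)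
  have "range (\<lambda>s. sgn (poly_curve (circle_curve a w0) s)) \<subseteq> {v. a \<bullet> v = 0 \<and> v \<bullet> v = 1}"
    using curve[OF w0] unfolding unit_trace_def by blast
  then have "infinite {v. a \<bullet> v = 0 \<and> v \<bullet> v = 1}"
    using infinite_range_sgn_poly_curve[OF proj_injective_circle_curve[OF a w0]] by (rule infinite_super)
  then show ?thesis
    using isolated_local_extrema_on_curve_family[OF f order.refl X _ finite.emptyI] curve by fastforce
qed

context nondeg_qform
begin

lemma closed_cone: "closed {v. qf v = 0 \<and> v \<bullet> v = 1}"
  by (intro closed_Collect_conj closed_Collect_eq continuous_intros qf_continuous)

lemma cone_curve_through:
  assumes v0: "qf v0 = 0" "v0 \<bullet> v0 = 1" and x: "qf x = 0" "x \<bullet> x = 1" "x \<noteq> v0" "x \<noteq> - v0"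
  shows "triple v0 (v0 \<times> x) x \<noteq> 0"
    "{v. qf v = 0 \<and> v \<bullet> v = 1} \<subseteq> unit_trace (cone_curve v0 (v0 \<times> x) x) \<union> {x, - x}"
proof -
  have "v0 \<times> x \<noteq> 0"
  proof
    assume "v0 \<times> x = 0"
    then have "x \<times> v0 = 0" by (metis cross_skew neg_equal_0_iff_equal)
    then show False using unit_parallel_imp_eq_or_neg[OF x(2) v0(2)] x(3,4) by blast
  qed
  then show T: "triple v0 (v0 \<times> x) x \<noteq> 0" by (simp add: triple_cross_self)
  have "bf v0 x \<noteq> 0" using isotropic_orthogonal_imp_parallel[OF v0(1) x(1)] \<open>v0 \<times> x \<noteq> 0\<close> by blast
  then show "{v. qf v = 0 \<and> v \<bullet> v = 1} \<subseteq> unit_trace (cone_curve v0 (v0 \<times> x) x) \<union> {x, - x}"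
    using cone_subset_unit_trace_cone_curve[OF v0 T x(1,2)] by blast
qed

lemma isolated_local_extrema_on_cone:
  fixes f :: "real^3 \<Rightarrow> real"
  assumes f: "poly_function 4 f" "\<And>t v. f (t *\<^sub>R v) = t^4 * f v"
    and X: "X = {v. qf v = 0 \<and> v \<bullet> v = 1} \<union> D" "closed D" "finite ({v. qf v = 0 \<and> v \<bullet> v = 1} \<inter> D)"
  shows "finite ({v. isolated_local_extremum_on f X v} \<inter> {v. qf v = 0 \<and> v \<bullet> v = 1})
    \<and> card ({v. isolated_local_extremum_on f X v} \<inter> {v. qf v = 0 \<and> v \<bullet> v = 1}) \<le> 20"
proof (cases "{v. qf v = 0 \<and> v \<bullet> v = 1} = {}")
  case False
  then obtain v0 where v0: "qf v0 = 0" "v0 \<bullet> v0 = 1" by blast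
  obtain w where w: "v0 \<bullet> w = 0" "w \<bullet> w = 1" by (rule exists_unit_orthogonal)
  then have "(v0 \<times> w) \<bullet> (v0 \<times> w) = 1" using norm_cross[of v0 w] v0(2) by (simp add: power2_norm_eq_inner)
  then have T: "triple v0 (v0 \<times> w) w \<noteq> 0" by (simp add: triple_cross_self)
  have "range (\<lambda>s. sgn (poly_curve (cone_curve v0 (v0 \<times> w) w) s)) \<subseteq> {v. qf v = 0 \<and> v \<bullet> v = 1}"
    using unit_trace_cone_curve_subset[OF v0 T] unfolding unit_trace_def by blast
  then have "infinite {v. qf v = 0 \<and> v \<bullet> v = 1}"
    using infinite_range_sgn_poly_curve[OF proj_injective_cone_curve[OF v0 T]] by (rule infinite_super)
  moreover have "\<exists>c. (\<forall>i. degree (c i) \<le> 2) \<and> (\<forall>s. poly_curve c s \<noteq> 0) \<and> proj_injective c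
      \<and> unit_trace c \<subseteq> {v. qf v = 0 \<and> v \<bullet> v = 1} \<and> {v. qf v = 0 \<and> v \<bullet> v = 1} \<subseteq> unit_trace c \<union> {x, - x}"
    if "x \<in> {v. qf v = 0 \<and> v \<bullet> v = 1} - {v0, - v0}" for x
  proof -
    have x: "qf x = 0" "x \<bullet> x = 1" "x \<noteq> v0" "x \<noteq> - v0" using that by auto
    note T = cone_curve_through(1)[OF v0 x]
    show ?thesis
      using degree_cone_curve poly_curve_cone_curve_nonzero[OF v0 T] proj_injective_cone_curve[OF v0 T]
        unit_trace_cone_curve_subset[OF v0 T] cone_curve_through(2)[OF v0 x] by blast
  qed
  ultimately show ?thesis
    using isolated_local_extrema_on_curve_family[OF f _ X, of 2 "{v0, - v0}"] by simp
next
  case True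
  then show ?thesis by (simp only: Int_empty_right) simp
qed

lemma card_isolated_local_extrema_le_28:
  fixes f :: "real^3 \<Rightarrow> real"
  assumes f: "poly_function 4 f" "\<And>t v. f (t *\<^sub>R v) = t^4 * f v" and a: "a \<noteq> 0"
  defines "X \<equiv> {v. (a \<bullet> v) * qf v = 0 \<and> v \<bullet> v = 1}"
  defines "E \<equiv> {v. isolated_local_extremum_on f X v}"
  shows "finite E \<and> card E \<le> 28"
proof -
  define C1 where "C1 = {v. a \<bullet> v = 0 \<and> v \<bullet> v = 1}"
  define C2 where "C2 = {v. qf v = 0 \<and> v \<bullet> v = 1}"
  have X: "X = C1 \<union> C2" "X = C2 \<union> C1" unfolding X_def C1_def C2_def by auto
  have "C1 \<inter> C2 = {v. a \<bullet> v = 0 \<and> qf v = 0 \<and> v \<bullet> v = 1}" unfolding C1_def C2_def by auto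
  then have "finite (C1 \<inter> C2)" "finite (C2 \<inter> C1)" using finite_circle_inter_cone[OF a] by (simp_all add: Int_commute)
  then have parts: "finite (E \<inter> C1)" "card (E \<inter> C1) \<le> 8" "finite (E \<inter> C2)" "card (E \<inter> C2) \<le> 20"
    using isolated_local_extrema_on_great_circle[OF f a X(1)[unfolded C1_def]]
      isolated_local_extrema_on_cone[OF f X(2)[unfolded C2_def]] closed_cone closed_great_circle
    unfolding E_def C1_def C2_def by simp_all
  have E: "E = (E \<inter> C1) \<union> (E \<inter> C2)"
    unfolding E_def X(1) isolated_local_extremum_on_def local_extremum_on_def by auto
  then have "finite E" using parts(1,3) by (metis finite_Un)
  moreover have "card E \<le> card (E \<inter> C1) + card (E \<inter> C2)" by (subst E) (rule card_Un_le)
  ultimately show ?thesis using parts(2,4) by linarith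
qed

end

lemma cyl_isolated_local_extremum_iff:
  "cyl_isolated_local_extremum p1 p2 p3 v \<longleftrightarrow>
     isolated_local_extremum_on (cyl_f p1 p2 p3) (cyl_dirs p1 p2 p3) v"
  unfolding cyl_isolated_local_extremum_def cyl_local_extremum_def isolated_local_extremum_on_def
    local_extremum_on_def ..

theorem mainTheorem3:
  fixes p1 p2 p3 :: "real^3"
  assumes simplex: "det (cyl_M p1 p2 p3) \<noteq> 0"
    and areas: "\<exists>a b c d. {a, b, c, d} = {0, 1, 2, 3 :: nat} \<and> card {a, b, c, d} = 4 \<and>
                 facet_area p1 p2 p3 a = facet_area p1 p2 p3 b \<and>
                 facet_area p1 p2 p3 c = facet_area p1 p2 p3 d \<and>
                 facet_area p1 p2 p3 a \<noteq> facet_area p1 p2 p3 c"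
  shows "finite {v. cyl_isolated_local_extremum p1 p2 p3 v}
         \<and> card {v. cyl_isolated_local_extremum p1 p2 p3 v} \<le> 28
         \<and> (\<exists>l q. linear_form l \<and> irreducible_quadratic_form q \<and>
                  (\<forall>v. cyl_g1 p1 p2 p3 v = l v * q v))"
proof -
  obtain a S where a: "a \<noteq> 0" and S: "nondeg_qform S"
    and g1: "\<And>v. cyl_g1 p1 p2 p3 v = (a \<bullet> v) * (v \<bullet> (S *v v))"
    using cyl_g1_factors[OF simplex areas] by blast
  interpret nondeg_qform S by (rule S)
  have "cyl_dirs p1 p2 p3 = {v. (a \<bullet> v) * qf v = 0 \<and> v \<bullet> v = 1}"
    unfolding cyl_dirs_def cyl_g2_def bf_def using g1 by auto
  then have "finite {v. cyl_isolated_local_extremum p1 p2 p3 v}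
      \<and> card {v. cyl_isolated_local_extremum p1 p2 p3 v} \<le> 28"
    unfolding cyl_isolated_local_extremum_iff
    using card_isolated_local_extrema_le_28[OF poly_function_cyl_f[OF simplex] cyl_f_scaleR[OF simplex] a]
    by simp
  moreover have "linear_form (\<lambda>v. a \<bullet> v)" unfolding linear_form_def using a by blast
  moreover have "irreducible_quadratic_form qf" by (rule irreducible_quadratic_form_qf)
  ultimately show ?thesis using g1 unfolding bf_def by auto
qed

end
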